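(* Consider NEAR-DGD$^t$ started from a common point $y_{i,0}=s_0$ ($1\le i\le n$). Suppose each $f_i$ is $\mu_i$-strongly convex with $L_i$-Lipschitz gradient; let $x^\star$ be the unique minimizer of $h=\sum_if_i$, and let $$0<\alpha\le\min\{1/L,\,c_4\}.$$ Then for every $\delta>0$ and all $k=0,1,2,\ldots$, $$\|\bar x_{k+1}-x^\star\|^2\le c_1^2\|\bar x_k-x^\star\|^2+c_3^2\beta^{2t},$$ where $c_1^2=1-\alpha c_2+\alpha\delta-\alpha^2\delta c_2$ and $c_3^2=\alpha(\alpha+\delta^{-1})D^2L^2$. In particular, if $\alpha c_2<1$ and $\delta=\frac{c_2}{2(1-\alpha c_2)}$, then $c_1=\sqrt{1-\alpha c_2/2}\in(0,1)$ and for all $k\ge0$ $$\|\bar x_k-x^\star\|\le c_1^k\|\bar x_0-x^\star\|+\frac{LD\beta^t}{c_2}\sqrt{2(2-\alpha c_2)}.$$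
   Context: NEAR-DGD$^t$ (fixed integer $t\ge1$): $\mathbf{x}_k=\mathbf{Z}^t\mathbf{y}_k$, $\mathbf{y}_{k+1}=\mathbf{x}_k-\alpha\nabla\mathbf{f}(\mathbf{x}_k)$, where $\mathbf{Z}=\mathbf{W}\otimes I_p$, $\mathbf{W}$ a symmetric doubly-stochastic $n\times n$ matrix of a connected network ($w_{ii}>0$, $w_{ij}>0$ iff neighbours) with simple eigenvalue $1$ and other eigenvalues in $(-1,1)$, $\beta\in(0,1)$ its second largest eigenvalue magnitude; $\mathbf{x}=(x_1;\ldots;x_n)$, $\nabla\mathbf{f}(\mathbf{x})=(\nabla f_1(x_1);\ldots;\nabla f_n(x_n))$, $\bar x_k=\frac1n\sum_ix_{i,k}$. Constants: $L=\max_iL_i$, $\mu_{\bar f}=\frac1n\sum_i\mu_i$, $L_{\bar f}=\frac1n\sum_iL_i$, $c_2=\frac{2\mu_{\bar f}L_{\bar f}}{\mu_{\bar f}+L_{\bar f}}$, $c_4=\frac{2}{\mu_{\bar f}+L_{\bar f}}$, $D=\|\mathbf{y}_0-\mathbf{u}^\star\|+\frac{\nu+4}{\nu}\|\mathbf{u}^\star\|$ with $\mathbf{u}^\star=(u_1^\star;\ldots;u_n^\star)$, $u_i^\star=\arg\min f_i$, $\nu=2\alpha\gamma$, $\gamma=\min_i\frac{\mu_iL_i}{\mu_i+L_i}$. *)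

theory Defs
  imports "HOL-Analysis.Analysis"
begin

text \<open>Agents are indexed by 0..<n; local variables live in a Euclidean space 'a (= R^p).
  A matrix W is a function nat => nat => real, only entries with indices below n matter.\<close>

definition strongly_convex :: "real \<Rightarrow> ('a::real_normed_vector \<Rightarrow> real) \<Rightarrow> bool" where
  "strongly_convex \<mu> f \<longleftrightarrow>
     (\<forall>x y. \<forall>s::real. 0 \<le> s \<and> s \<le> 1 \<longrightarrow>
        f (s *\<^sub>R x + (1 - s) *\<^sub>R y) \<le> s * f x + (1 - s) * f y - \<mu> / 2 * s * (1 - s) * (norm (x - y))\<^sup>2)"

definition is_gradient :: "('a::real_inner \<Rightarrow> real) \<Rightarrow> ('a \<Rightarrow> 'a) \<Rightarrow> bool" where
  "is_gradient f g \<longleftrightarrow> (\<forall>x. (f has_derivative (\<lambda>h. g x \<bullet> h)) (at x))"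

text \<open>One application of Z = W \<otimes> I_p to a stacked vector.\<close>
definition mix :: "(nat \<Rightarrow> nat \<Rightarrow> real) \<Rightarrow> nat \<Rightarrow> (nat \<Rightarrow> 'a::real_vector) \<Rightarrow> (nat \<Rightarrow> 'a)" where
  "mix W n y = (\<lambda>i. \<Sum>j<n. W i j *\<^sub>R y j)"

primrec near_dgd_y :: "(nat \<Rightarrow> nat \<Rightarrow> real) \<Rightarrow> nat \<Rightarrow> nat \<Rightarrow> real \<Rightarrow> (nat \<Rightarrow> 'a \<Rightarrow> 'a)
     \<Rightarrow> (nat \<Rightarrow> 'a::real_vector) \<Rightarrow> nat \<Rightarrow> (nat \<Rightarrow> 'a)" where
  "near_dgd_y W n t \<alpha> g y0 0 = y0"
| "near_dgd_y W n t \<alpha> g y0 (Suc k) =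
     (let x = (mix W n ^^ t) (near_dgd_y W n t \<alpha> g y0 k) in (\<lambda>i. x i - \<alpha> *\<^sub>R g i (x i)))"

definition near_dgd_x :: "(nat \<Rightarrow> nat \<Rightarrow> real) \<Rightarrow> nat \<Rightarrow> nat \<Rightarrow> real \<Rightarrow> (nat \<Rightarrow> 'a \<Rightarrow> 'a)
     \<Rightarrow> (nat \<Rightarrow> 'a::real_vector) \<Rightarrow> nat \<Rightarrow> (nat \<Rightarrow> 'a)" where
  "near_dgd_x W n t \<alpha> g y0 k = (mix W n ^^ t) (near_dgd_y W n t \<alpha> g y0 k)"

definition avg :: "nat \<Rightarrow> (nat \<Rightarrow> 'a::real_vector) \<Rightarrow> 'a" where
  "avg n x = (1 / real n) *\<^sub>R (\<Sum>i<n. x i)"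

definition snorm :: "nat \<Rightarrow> (nat \<Rightarrow> 'a::real_normed_vector) \<Rightarrow> real" where
  "snorm n x = sqrt (\<Sum>i<n. (norm (x i))\<^sup>2)"

definition symmetric_doubly_stochastic :: "(nat \<Rightarrow> nat \<Rightarrow> real) \<Rightarrow> nat \<Rightarrow> bool" where
  "symmetric_doubly_stochastic W n \<longleftrightarrow>
     (\<forall>i<n. \<forall>j<n. W i j = W j i \<and> 0 \<le> W i j) \<and> (\<forall>i<n. (\<Sum>j<n. W i j) = 1)"

definition neighbours :: "(nat \<Rightarrow> nat \<Rightarrow> real) \<Rightarrow> nat \<Rightarrow> (nat \<times> nat) set" where
  "neighbours W n = {(i, j). i < n \<and> j < n \<and> i \<noteq> j \<and> 0 < W i j}"

definition connected_network :: "(nat \<Rightarrow> nat \<Rightarrow> real) \<Rightarrow> nat \<Rightarrow> bool" where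
  "connected_network W n \<longleftrightarrow> (\<forall>i<n. \<forall>j<n. (i, j) \<in> (neighbours W n)\<^sup>*)"

definition is_eigenvalue :: "(nat \<Rightarrow> nat \<Rightarrow> real) \<Rightarrow> nat \<Rightarrow> real \<Rightarrow> bool" where
  "is_eigenvalue W n e \<longleftrightarrow> (\<exists>v. (\<exists>i<n. v i \<noteq> 0) \<and> (\<forall>i<n. (\<Sum>j<n. W i j * v j) = e * v i))"

text \<open>For a symmetric matrix, eigenvalue 1 is simple iff its eigenspace is the span of the ones vector.\<close>
definition simple_eigenvalue_one :: "(nat \<Rightarrow> nat \<Rightarrow> real) \<Rightarrow> nat \<Rightarrow> bool" where
  "simple_eigenvalue_one W n \<longleftrightarrow> is_eigenvalue W n 1 \<and>
     (\<forall>v. (\<forall>i<n. (\<Sum>j<n. W i j * v j) = v i) \<longrightarrow> (\<forall>i<n. \<forall>j<n. v i = v j))"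

definition second_eig_mag :: "(nat \<Rightarrow> nat \<Rightarrow> real) \<Rightarrow> nat \<Rightarrow> real" where
  "second_eig_mag W n = Max (abs ` {e. is_eigenvalue W n e \<and> e \<noteq> 1})"

end

theory Submission
  imports Defs "Jordan_Normal_Form.Spectral_Radius"
begin

text \<open>
  Since \<open>W\<close> is doubly stochastic, mixing preserves network averages, so
  \<open>xbar (k+1) = xbar k - \<alpha> * avg_i (\<nabla>f_i (x_i k))\<close>: a gradient step for \<open>h / n\<close> at \<open>xbar k\<close>,
  which contracts the distance to \<open>x*\<close> by the factor \<open>1 - \<alpha> c2\<close> (strong convexity and
  smoothness combine via co-coercivity of the gradient), perturbed by the error of evaluating the
  gradients at the agents' points instead of at their mean. By Lipschitz continuity this error is
  controlled by the disagreement of the \<open>x_i k\<close>, which \<open>t\<close> mixing rounds shrink by \<open>\<beta>^t\<close>: the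
  maximum of \<open>|Wv|\<close> over unit zero-sum vectors is attained at some \<open>v\<close> with \<open>W\<^sup>2 v = \<sigma>\<^sup>2 v\<close>,
  which yields an eigenvalue \<open>\<plusminus>\<sigma> \<noteq> 1\<close> of \<open>W\<close>. The disagreement is finally bounded through
  \<open>D\<close>, because every local gradient step contracts towards the local minimiser \<open>u_i*\<close> and so
  keeps the iterates bounded. Young's inequality with weight \<open>\<alpha> \<delta>\<close> combines both parts;
  unrolling the resulting affine recursion for \<open>\<delta> = c2 / (2 (1 - \<alpha> c2))\<close> gives the linear rate.
\<close>

section \<open>Smooth strongly convex functions\<close>

definition quadratically_bounded :: "real \<Rightarrow> real \<Rightarrow> ('a::real_inner \<Rightarrow> real) \<Rightarrow> ('a \<Rightarrow> 'a) \<Rightarrow> bool" where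
  "quadratically_bounded \<mu> L f g \<longleftrightarrow>
     (\<forall>x y. f x + g x \<bullet> (y - x) + \<mu> / 2 * (norm (y - x))\<^sup>2 \<le> f y \<and>
            f y \<le> f x + g x \<bullet> (y - x) + L / 2 * (norm (y - x))\<^sup>2)"

lemma has_field_derivative_along_line:
  assumes "is_gradient f g"
  shows "((\<lambda>s. f (x + s *\<^sub>R d)) has_field_derivative (g (x + s *\<^sub>R d) \<bullet> d)) (at s)"
proof -
  have f': "(f has_derivative (\<lambda>h. g (x + s *\<^sub>R d) \<bullet> h)) (at (x + s *\<^sub>R d))"
    using assms unfolding is_gradient_def by simp
  have line': "((\<lambda>s. x + s *\<^sub>R d) has_derivative (\<lambda>s. s *\<^sub>R d)) (at s)"
    by (auto intro!: derivative_eq_intros)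
  have "((\<lambda>s. f (x + s *\<^sub>R d)) has_derivative (\<lambda>h. g (x + s *\<^sub>R d) \<bullet> (h *\<^sub>R d))) (at s)"
    using has_derivative_compose[OF line' f'] by (simp add: o_def)
  then show ?thesis
    by (simp add: has_field_derivative_def mult_commute_abs)
qed

lemma strongly_convex_gradient_lower_bound:
  fixes f :: "'a::real_inner \<Rightarrow> real"
  assumes sc: "strongly_convex \<mu> f" and gr: "is_gradient f g"
  shows "f x + g x \<bullet> (y - x) + \<mu> / 2 * (norm (y - x))\<^sup>2 \<le> f y"
proof -
  define d where "d = y - x"
  define \<phi> where "\<phi> = (\<lambda>s::real. f (x + s *\<^sub>R d))"
  have "(\<phi> has_field_derivative (g x \<bullet> d)) (at 0)"
    using has_field_derivative_along_line[OF gr, of x d 0] by (simp add: \<phi>_def)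
  then have quotient: "((\<lambda>s. (\<phi> s - \<phi> 0) / s) \<longlongrightarrow> g x \<bullet> d) (at_right 0)"
    by (simp add: DERIV_def filterlim_at_split)
  have limit: "((\<lambda>s. f y - f x - \<mu> / 2 * (1 - s) * (norm d)\<^sup>2)
                  \<longlongrightarrow> f y - f x - \<mu> / 2 * (1 - 0) * (norm d)\<^sup>2) (at_right 0)"
    by (intro tendsto_intros)
  have "eventually (\<lambda>s. s \<in> {0<..<1}) (at_right (0::real))"
    by (rule eventually_at_right_real) simp
  then have bound: "eventually (\<lambda>s. (\<phi> s - \<phi> 0) / s \<le> f y - f x - \<mu> / 2 * (1 - s) * (norm d)\<^sup>2) (at_right 0)"
  proof (rule eventually_mono)
    fix s :: real assume s: "s \<in> {0<..<1}"
    have "f (s *\<^sub>R y + (1 - s) *\<^sub>R x) \<le> s * f y + (1 - s) * f x - \<mu> / 2 * s * (1 - s) * (norm (y - x))\<^sup>2"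
      using sc s unfolding strongly_convex_def by auto
    moreover have "s *\<^sub>R y + (1 - s) *\<^sub>R x = x + s *\<^sub>R d"
      by (simp add: d_def algebra_simps)
    ultimately have "\<phi> s - \<phi> 0 \<le> s * (f y - f x - \<mu> / 2 * (1 - s) * (norm d)\<^sup>2)"
      unfolding \<phi>_def d_def by (simp add: algebra_simps)
    then show "(\<phi> s - \<phi> 0) / s \<le> f y - f x - \<mu> / 2 * (1 - s) * (norm d)\<^sup>2"
      using s by (simp add: divide_simps mult.commute)
  qed
  have "g x \<bullet> d \<le> f y - f x - \<mu> / 2 * (1 - 0) * (norm d)\<^sup>2"
    using tendsto_le[OF trivial_limit_at_right_real limit quotient bound] .
  then show ?thesis unfolding d_def by simp
qed

lemma lipschitz_gradient_upper_bound:
  fixes f :: "'a::real_inner \<Rightarrow> real"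
  assumes gr: "is_gradient f g" and lip: "L-lipschitz_on UNIV g"
  shows "f y \<le> f x + g x \<bullet> (y - x) + L / 2 * (norm (y - x))\<^sup>2"
proof -
  define d where "d = y - x"
  define \<psi> where "\<psi> = (\<lambda>s::real. f (x + s *\<^sub>R d) - s * (g x \<bullet> d) - L / 2 * s\<^sup>2 * (norm d)\<^sup>2)"
  have "\<psi> 1 \<le> \<psi> 0"
  proof (rule DERIV_nonpos_imp_nonincreasing[of 0 1 \<psi>])
    fix s :: real assume s: "0 \<le> s" "s \<le> 1"
    have "(\<psi> has_field_derivative (g (x + s *\<^sub>R d) \<bullet> d - g x \<bullet> d - L / 2 * (2 * s) * (norm d)\<^sup>2)) (at s)"
      unfolding \<psi>_def by (rule derivative_eq_intros has_field_derivative_along_line[OF gr] | simp)+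
    moreover have "(g (x + s *\<^sub>R d) - g x) \<bullet> d \<le> L * s * (norm d)\<^sup>2"
    proof -
      have "(g (x + s *\<^sub>R d) - g x) \<bullet> d \<le> norm (g (x + s *\<^sub>R d) - g x) * norm d"
        by (rule norm_cauchy_schwarz)
      also have "\<dots> \<le> L * norm (s *\<^sub>R d) * norm d"
        using lip unfolding lipschitz_on_def dist_norm
        by (intro mult_right_mono) (metis UNIV_I add_diff_cancel_left', simp)
      finally show ?thesis
        using s by (simp add: power2_eq_square mult.assoc)
    qed
    ultimately show "\<exists>y. (\<psi> has_field_derivative y) (at s) \<and> y \<le> 0"
      by (auto simp: inner_diff_left)
  qed simp
  then show ?thesis unfolding \<psi>_def d_def by simp
qed

lemma quadratically_bounded_if_strongly_convex_lipschitz: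
  fixes f :: "'a::real_inner \<Rightarrow> real"
  assumes "strongly_convex \<mu> f" "is_gradient f g" "L-lipschitz_on UNIV g"
  shows "quadratically_bounded \<mu> L f g"
  using strongly_convex_gradient_lower_bound lipschitz_gradient_upper_bound assms
  unfolding quadratically_bounded_def by blast

lemma quadratically_bounded_sum:
  fixes f :: "'i \<Rightarrow> 'a::real_inner \<Rightarrow> real"
  assumes "\<And>i. i \<in> I \<Longrightarrow> quadratically_bounded (\<mu> i) (L i) (f i) (g i)"
  shows "quadratically_bounded (\<Sum>i\<in>I. \<mu> i) (\<Sum>i\<in>I. L i) (\<lambda>z. \<Sum>i\<in>I. f i z) (\<lambda>z. \<Sum>i\<in>I. g i z)"
  unfolding quadratically_bounded_def
proof (intro allI conjI)
  fix x y :: 'a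
  have "(\<Sum>i\<in>I. f i x + g i x \<bullet> (y - x) + \<mu> i / 2 * (norm (y - x))\<^sup>2) \<le> (\<Sum>i\<in>I. f i y)"
    and "(\<Sum>i\<in>I. f i y) \<le> (\<Sum>i\<in>I. f i x + g i x \<bullet> (y - x) + L i / 2 * (norm (y - x))\<^sup>2)"
    using assms unfolding quadratically_bounded_def by (intro sum_mono; blast)+
  then show "(\<Sum>i\<in>I. f i x) + (\<Sum>i\<in>I. g i x) \<bullet> (y - x) + (\<Sum>i\<in>I. \<mu> i) / 2 * (norm (y - x))\<^sup>2 \<le> (\<Sum>i\<in>I. f i y)"
    and "(\<Sum>i\<in>I. f i y) \<le> (\<Sum>i\<in>I. f i x) + (\<Sum>i\<in>I. g i x) \<bullet> (y - x) + (\<Sum>i\<in>I. L i) / 2 * (norm (y - x))\<^sup>2"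
    by (simp_all add: sum.distrib inner_sum_left sum_divide_distrib[symmetric] sum_distrib_right)
qed

lemma quadratically_bounded_scale:
  assumes "quadratically_bounded \<mu> L f g" and "0 \<le> c"
  shows "quadratically_bounded (c * \<mu>) (c * L) (\<lambda>z. c * f z) (\<lambda>z. c *\<^sub>R g z)"
  unfolding quadratically_bounded_def
proof (intro allI conjI)
  fix x y
  have eq: "c * (f x + g x \<bullet> (y - x) + m / 2 * (norm (y - x))\<^sup>2)
      = c * f x + (c *\<^sub>R g x) \<bullet> (y - x) + c * m / 2 * (norm (y - x))\<^sup>2" for m :: real
    by (simp add: algebra_simps)
  have "f x + g x \<bullet> (y - x) + \<mu> / 2 * (norm (y - x))\<^sup>2 \<le> f y"
    and "f y \<le> f x + g x \<bullet> (y - x) + L / 2 * (norm (y - x))\<^sup>2"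
    using assms(1) unfolding quadratically_bounded_def by auto
  then show "c * f x + (c *\<^sub>R g x) \<bullet> (y - x) + c * \<mu> / 2 * (norm (y - x))\<^sup>2 \<le> c * f y"
    and "c * f y \<le> c * f x + (c *\<^sub>R g x) \<bullet> (y - x) + c * L / 2 * (norm (y - x))\<^sup>2"
    unfolding eq[symmetric] using assms(2) by (simp_all add: mult_left_mono)
qed

lemma quadratically_bounded_le:
  fixes f :: "'a::euclidean_space \<Rightarrow> real"
  assumes "quadratically_bounded \<mu> L f g"
  shows "\<mu> \<le> L"
proof -
  obtain b :: 'a where "b \<in> Basis" using nonempty_Basis by blast
  then have "(norm (b - 0))\<^sup>2 = 1" by simp
  moreover have "f 0 + g 0 \<bullet> (b - 0) + \<mu> / 2 * (norm (b - 0))\<^sup>2 \<le> f b"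
    and "f b \<le> f 0 + g 0 \<bullet> (b - 0) + L / 2 * (norm (b - 0))\<^sup>2"
    using assms unfolding quadratically_bounded_def by blast+
  ultimately show ?thesis by simp
qed

lemma quadratically_bounded_gradient_eq_0_at_minimizer:
  fixes f :: "'a::real_inner \<Rightarrow> real"
  assumes qb: "quadratically_bounded \<mu> L f g" and L0: "0 \<le> L" and min: "\<And>z. f x \<le> f z"
  shows "g x = 0"
proof -
  define t where "t = 1 / (L + 1)"
  have t: "0 < t" "L * t < 1" using L0 by (simp_all add: t_def field_simps)
  have "f (x - t *\<^sub>R g x) \<le> f x + g x \<bullet> ((x - t *\<^sub>R g x) - x) + L / 2 * (norm ((x - t *\<^sub>R g x) - x))\<^sup>2"
    using qb unfolding quadratically_bounded_def by blast
  then have "0 \<le> g x \<bullet> (- (t *\<^sub>R g x)) + L / 2 * (norm (- (t *\<^sub>R g x)))\<^sup>2"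
    using min[of "x - t *\<^sub>R g x"] by simp
  also have "g x \<bullet> (- (t *\<^sub>R g x)) = - t * (norm (g x))\<^sup>2"
    by (simp add: dot_square_norm)
  also have "(norm (- (t *\<^sub>R g x)))\<^sup>2 = t\<^sup>2 * (norm (g x))\<^sup>2"
    by (simp add: power_mult_distrib)
  finally have "0 \<le> t * (norm (g x))\<^sup>2 * (L * t / 2 - 1)"
    by (simp add: algebra_simps power2_eq_square)
  then have "t * (norm (g x))\<^sup>2 \<le> 0"
    using t by (simp add: zero_le_mult_iff)
  then show ?thesis using t by (simp add: mult_le_0_iff)
qed

lemma quadratically_bounded_shift:
  assumes "quadratically_bounded \<mu> L f g"
  shows "quadratically_bounded 0 (L - \<mu>) (\<lambda>z. f z - \<mu> / 2 * (norm z)\<^sup>2) (\<lambda>z. g z - \<mu> *\<^sub>R z)"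
  unfolding quadratically_bounded_def
proof (intro allI conjI)
  fix x y
  have shift: "f y - \<mu> / 2 * (norm y)\<^sup>2 - (f x - \<mu> / 2 * (norm x)\<^sup>2) - (g x - \<mu> *\<^sub>R x) \<bullet> (y - x)
      = f y - f x - g x \<bullet> (y - x) - \<mu> / 2 * (norm (y - x))\<^sup>2"
    unfolding power2_norm_eq_inner
    by (simp add: inner_diff_left inner_diff_right inner_commute algebra_simps)
  have "f x + g x \<bullet> (y - x) + \<mu> / 2 * (norm (y - x))\<^sup>2 \<le> f y"
    and "f y \<le> f x + g x \<bullet> (y - x) + L / 2 * (norm (y - x))\<^sup>2"
    using assms unfolding quadratically_bounded_def by blast+
  moreover have "(L - \<mu>) / 2 * (norm (y - x))\<^sup>2 = L / 2 * (norm (y - x))\<^sup>2 - \<mu> / 2 * (norm (y - x))\<^sup>2"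
    by (simp add: field_simps)
  ultimately show "f x - \<mu> / 2 * (norm x)\<^sup>2 + (g x - \<mu> *\<^sub>R x) \<bullet> (y - x) + 0 / 2 * (norm (y - x))\<^sup>2
        \<le> f y - \<mu> / 2 * (norm y)\<^sup>2"
    and "f y - \<mu> / 2 * (norm y)\<^sup>2
        \<le> f x - \<mu> / 2 * (norm x)\<^sup>2 + (g x - \<mu> *\<^sub>R x) \<bullet> (y - x) + (L - \<mu>) / 2 * (norm (y - x))\<^sup>2"
    using shift by linarith+
qed

lemma convex_smooth_gradient_cocoercive:
  fixes f :: "'a::real_inner \<Rightarrow> real"
  assumes qb: "quadratically_bounded 0 L f g" and L0: "0 \<le> L"
  shows "(norm (g x - g y))\<^sup>2 \<le> L * ((g x - g y) \<bullet> (x - y))"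
proof -
  have low: "f a + g a \<bullet> (b - a) \<le> f b" and up: "f b \<le> f a + g a \<bullet> (b - a) + L / 2 * (norm (b - a))\<^sup>2"
    for a b using qb unfolding quadratically_bounded_def by auto
  define G where "G = g x - g y"
  text \<open>Compare the lower bound at \<open>a\<close> with the upper bound at \<open>b\<close>, both taken at \<open>b - t (g b - g a)\<close>.\<close>
  have probe: "f a + g a \<bullet> (b - a) \<le> f b - t * (norm (g b - g a))\<^sup>2 + L / 2 * t\<^sup>2 * (norm (g b - g a))\<^sup>2"
    for a b and t :: real
  proof -
    define z where "z = b - t *\<^sub>R (g b - g a)"
    have "f a + g a \<bullet> (z - a) \<le> f b + g b \<bullet> (z - b) + L / 2 * (norm (z - b))\<^sup>2"
      using low[where a=a and b=z] up[where a=b and b=z] by linarith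
    moreover have "g a \<bullet> (z - a) - g b \<bullet> (z - b) = g a \<bullet> (b - a) + t * (norm (g b - g a))\<^sup>2"
      unfolding z_def power2_norm_eq_inner by (simp add: inner_diff_left inner_diff_right algebra_simps)
    moreover have "(norm (z - b))\<^sup>2 = t\<^sup>2 * (norm (g b - g a))\<^sup>2"
      by (simp add: z_def power_mult_distrib)
    ultimately show ?thesis by (simp add: algebra_simps)
  qed
  have combined: "(2 * t - L * t\<^sup>2) * (norm G)\<^sup>2 \<le> G \<bullet> (x - y)" for t :: real
    using probe[where a=y and b=x and t=t] probe[where a=x and b=y and t=t]
    by (simp add: G_def norm_minus_commute inner_diff_left inner_diff_right algebra_simps)
  show ?thesis
  proof (cases "L = 0")
    case True
    have "G \<bullet> (x - y) \<le> 0"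
      using up[where a=x and b=y] up[where a=y and b=x] True by (simp add: G_def inner_diff_left inner_diff_right algebra_simps)
    moreover have "2 * (norm G)\<^sup>2 \<le> G \<bullet> (x - y)" using combined[of 1] True by simp
    ultimately have "(norm G)\<^sup>2 \<le> 0" by linarith
    then show ?thesis using True by (simp add: G_def)
  next
    case False
    then have "(norm G)\<^sup>2 / L \<le> G \<bullet> (x - y)"
      using combined[of "1 / L"] L0 by (simp add: power2_eq_square field_simps)
    then show ?thesis using False L0 by (simp add: G_def field_simps)
  qed
qed

lemma quadratically_bounded_cocoercive:
  fixes f :: "'a::real_inner \<Rightarrow> real"
  assumes "quadratically_bounded \<mu> L f g" and "\<mu> \<le> L"
  shows "\<mu> * L * (norm (x - y))\<^sup>2 + (norm (g x - g y))\<^sup>2 \<le> (\<mu> + L) * ((g x - g y) \<bullet> (x - y))"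
proof -
  have "(norm ((g x - \<mu> *\<^sub>R x) - (g y - \<mu> *\<^sub>R y)))\<^sup>2 \<le> (L - \<mu>) * (((g x - \<mu> *\<^sub>R x) - (g y - \<mu> *\<^sub>R y)) \<bullet> (x - y))"
    using convex_smooth_gradient_cocoercive[OF quadratically_bounded_shift[OF assms(1)]] assms(2) by simp
  then show ?thesis
    unfolding power2_norm_eq_inner
    by (simp add: inner_diff_left inner_diff_right inner_commute algebra_simps)
qed

lemma gradient_step_rate_le_1:
  fixes \<mu> L \<alpha> :: real
  assumes "0 < \<mu>" "\<mu> \<le> L" "0 < \<alpha>" "\<alpha> \<le> 2 / (\<mu> + L)"
  shows "\<alpha> * (2 * \<mu> * L / (\<mu> + L)) \<le> 1"
proof -
  have "\<alpha> * (2 * \<mu> * L / (\<mu> + L)) \<le> 2 / (\<mu> + L) * (2 * \<mu> * L / (\<mu> + L))"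
    using assms by (intro mult_right_mono) auto
  also have "\<dots> = 4 * \<mu> * L / (\<mu> + L)\<^sup>2"
    by (simp add: power2_eq_square)
  also have "\<dots> \<le> 1"
  proof -
    have "4 * \<mu> * L \<le> (\<mu> + L)\<^sup>2"
      using zero_le_power2[of "\<mu> - L"] by (simp add: power2_eq_square algebra_simps)
    then show ?thesis using assms by simp
  qed
  finally show ?thesis .
qed

lemma quadratically_bounded_gradient_step:
  fixes f :: "'a::real_inner \<Rightarrow> real"
  assumes qb: "quadratically_bounded \<mu> L f g" and "\<mu> \<le> L" "0 < \<mu>" "0 < \<alpha>" "\<alpha> \<le> 2 / (\<mu> + L)"
  shows "(norm ((x - \<alpha> *\<^sub>R g x) - (y - \<alpha> *\<^sub>R g y)))\<^sup>2 \<le> (1 - \<alpha> * (2 * \<mu> * L / (\<mu> + L))) * (norm (x - y))\<^sup>2"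
proof -
  define d where "d = x - y"
  define e where "e = g x - g y"
  have pos: "0 < \<mu> + L" using assms by simp
  have "(norm ((x - \<alpha> *\<^sub>R g x) - (y - \<alpha> *\<^sub>R g y)))\<^sup>2 = (norm d)\<^sup>2 - 2 * \<alpha> * (e \<bullet> d) + \<alpha>\<^sup>2 * (norm e)\<^sup>2"
    unfolding d_def e_def power2_norm_eq_inner
    by (simp add: inner_diff_left inner_diff_right inner_commute algebra_simps power2_eq_square)
  also have "\<dots> \<le> (norm d)\<^sup>2 - 2 * \<alpha> * ((\<mu> * L * (norm d)\<^sup>2 + (norm e)\<^sup>2) / (\<mu> + L)) + 2 * \<alpha> / (\<mu> + L) * (norm e)\<^sup>2"
  proof -
    have cocoercive: "(\<mu> * L * (norm d)\<^sup>2 + (norm e)\<^sup>2) / (\<mu> + L) \<le> e \<bullet> d"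
      using quadratically_bounded_cocoercive[OF qb \<open>\<mu> \<le> L\<close>, of x y] pos
      by (simp add: d_def e_def field_simps)
    have step_size: "\<alpha>\<^sup>2 \<le> 2 * \<alpha> / (\<mu> + L)"
    proof -
      have "\<alpha> * (\<alpha> * (\<mu> + L)) \<le> \<alpha> * 2"
        using assms pos by (intro mult_left_mono) (simp_all add: field_simps)
      then show ?thesis using pos by (simp add: power2_eq_square field_simps)
    qed
    have "2 * \<alpha> * ((\<mu> * L * (norm d)\<^sup>2 + (norm e)\<^sup>2) / (\<mu> + L)) \<le> 2 * \<alpha> * (e \<bullet> d)"
      using cocoercive by (rule mult_left_mono) (use \<open>0 < \<alpha>\<close> in simp)
    moreover have "\<alpha>\<^sup>2 * (norm e)\<^sup>2 \<le> 2 * \<alpha> / (\<mu> + L) * (norm e)\<^sup>2"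
      using step_size by (rule mult_right_mono) simp
    ultimately show ?thesis by linarith
  qed
  also have "\<dots> = (1 - \<alpha> * (2 * \<mu> * L / (\<mu> + L))) * (norm d)\<^sup>2"
  proof -
    have "2 * \<alpha> * ((\<mu> * L * (norm d)\<^sup>2 + (norm e)\<^sup>2) / (\<mu> + L))
        = 2 * \<alpha> * \<mu> * L * (norm d)\<^sup>2 / (\<mu> + L) + 2 * \<alpha> / (\<mu> + L) * (norm e)\<^sup>2"
      by (simp add: add_divide_distrib algebra_simps)
    then show ?thesis by (simp add: algebra_simps)
  qed
  finally show ?thesis unfolding d_def .
qed

lemma quadratically_bounded_step_to_minimizer:
  fixes f :: "'a::euclidean_space \<Rightarrow> real"
  assumes qb: "quadratically_bounded \<mu> L f g" and "0 < \<mu>" "0 < \<alpha>" "\<alpha> \<le> 2 / (\<mu> + L)"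
    and \<nu>: "\<nu> \<le> \<alpha> * (2 * \<mu> * L / (\<mu> + L))" and min: "\<And>z. f xstar \<le> f z"
  shows "(norm (z - \<alpha> *\<^sub>R g z - xstar))\<^sup>2 \<le> (1 - \<nu>) * (norm (z - xstar))\<^sup>2"
proof -
  have "\<mu> \<le> L" using quadratically_bounded_le[OF qb] .
  then have "g xstar = 0"
    using quadratically_bounded_gradient_eq_0_at_minimizer[OF qb _ min] \<open>0 < \<mu>\<close> by simp
  then have "(norm (z - \<alpha> *\<^sub>R g z - xstar))\<^sup>2 \<le> (1 - \<alpha> * (2 * \<mu> * L / (\<mu> + L))) * (norm (z - xstar))\<^sup>2"
    using quadratically_bounded_gradient_step[OF qb \<open>\<mu> \<le> L\<close> assms(2-4), of z xstar] by simp
  also have "\<dots> \<le> (1 - \<nu>) * (norm (z - xstar))\<^sup>2"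
    using \<nu> by (intro mult_right_mono) simp_all
  finally show ?thesis .
qed

lemma quadratically_bounded_average:
  fixes f :: "nat \<Rightarrow> 'a::real_inner \<Rightarrow> real"
  assumes "\<And>i. i < n \<Longrightarrow> quadratically_bounded (\<mu> i) (L i) (f i) (g i)"
  shows "quadratically_bounded ((\<Sum>i<n. \<mu> i) / real n) ((\<Sum>i<n. L i) / real n)
           (\<lambda>z. (\<Sum>i<n. f i z) / real n) (\<lambda>z. avg n (\<lambda>i. g i z))"
  using quadratically_bounded_scale[OF quadratically_bounded_sum[of "{..<n}"], of \<mu> L f g "1 / real n"] assms
  by (simp add: avg_def)

section \<open>Stacked vectors\<close>

definition snorm2 :: "nat \<Rightarrow> (nat \<Rightarrow> 'a::real_normed_vector) \<Rightarrow> real" where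
  "snorm2 n y = (\<Sum>i<n. (norm (y i))\<^sup>2)"

definition sinner :: "nat \<Rightarrow> (nat \<Rightarrow> 'a::real_inner) \<Rightarrow> (nat \<Rightarrow> 'a) \<Rightarrow> real" where
  "sinner n x y = (\<Sum>i<n. x i \<bullet> y i)"

definition disagreement :: "nat \<Rightarrow> (nat \<Rightarrow> 'a::real_normed_vector) \<Rightarrow> real" where
  "disagreement n y = snorm2 n (\<lambda>i. y i - avg n y)"

lemma snorm2_nonneg: "0 \<le> snorm2 n y"
  by (simp add: snorm2_def sum_nonneg)

lemma snorm_nonneg: "0 \<le> snorm n y"
  by (simp add: snorm_def sum_nonneg)

lemma snorm_eq_sqrt_snorm2: "snorm n y = sqrt (snorm2 n y)"
  by (simp add: snorm_def snorm2_def)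

lemma snorm_power2: "(snorm n y)\<^sup>2 = snorm2 n y"
  by (simp add: snorm_eq_sqrt_snorm2 snorm2_nonneg)

lemma snorm2_eq_0_iff: "snorm2 n y = 0 \<longleftrightarrow> (\<forall>i<n. y i = 0)"
  by (auto simp: snorm2_def sum_nonneg_eq_0_iff)

lemma snorm2_eq_sinner: "snorm2 n y = sinner n y y"
  by (simp add: snorm2_def sinner_def dot_square_norm)

lemma sinner_commute: "sinner n x y = sinner n y x"
  by (simp add: sinner_def inner_commute)

lemma snorm2_add_scaleR:
  "snorm2 n (\<lambda>i. x i + c *\<^sub>R y i) = snorm2 n x + 2 * c * sinner n x y + c\<^sup>2 * snorm2 n y"
proof -
  have "(norm (x i + c *\<^sub>R y i))\<^sup>2 = (norm (x i))\<^sup>2 + 2 * c * (x i \<bullet> y i) + c\<^sup>2 * (norm (y i))\<^sup>2" for i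
    unfolding power2_norm_eq_inner
    by (simp add: inner_add_left inner_add_right inner_commute power2_eq_square algebra_simps)
  then show ?thesis
    by (simp add: snorm2_def sinner_def sum.distrib sum_distrib_left)
qed

lemma snorm_add_le: "snorm n (\<lambda>i. x i + y i) \<le> snorm n x + snorm n y"
proof -
  have L2: "snorm n z = L2_set (\<lambda>i. norm (z i)) {..<n}" for z :: "nat \<Rightarrow> 'a"
    by (simp add: snorm_def L2_set_def)
  have "snorm n (\<lambda>i. x i + y i) \<le> L2_set (\<lambda>i. norm (x i) + norm (y i)) {..<n}"
    unfolding L2 by (rule L2_set_mono) (auto intro: norm_triangle_ineq)
  also have "\<dots> \<le> snorm n x + snorm n y"
    unfolding L2 by (rule L2_set_triangle_ineq)
  finally show ?thesis .
qed

lemma snorm_diff_le: "snorm n (\<lambda>i. x i - y i) \<le> snorm n x + snorm n y"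
  using snorm_add_le[of n x "\<lambda>i. - y i"] by (simp add: snorm_def)

lemma snorm2_add_const:
  fixes z :: "nat \<Rightarrow> 'a::real_inner"
  assumes "(\<Sum>i<n. z i) = 0"
  shows "snorm2 n (\<lambda>i. z i + c) = snorm2 n z + real n * (norm c)\<^sup>2"
proof -
  have "snorm2 n (\<lambda>i. z i + c) = (\<Sum>i<n. (norm (z i))\<^sup>2 + 2 * (z i \<bullet> c) + (norm c)\<^sup>2)"
    unfolding snorm2_def power2_norm_eq_inner
    by (simp add: inner_add_left inner_add_right inner_commute)
  also have "\<dots> = snorm2 n z + 2 * ((\<Sum>i<n. z i) \<bullet> c) + real n * (norm c)\<^sup>2"
    by (simp add: sum.distrib snorm2_def inner_sum_left sum_distrib_left)
  finally show ?thesis using assms by simp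
qed

lemma mix_add_scaleR: "mix W n (\<lambda>i. x i + c *\<^sub>R y i) = (\<lambda>i. mix W n x i + c *\<^sub>R mix W n y i)"
  by (simp add: mix_def scaleR_add_right sum.distrib scaleR_sum_right mult.commute)

lemma mix_diff: "mix W n (\<lambda>i. x i - y i) = (\<lambda>i. mix W n x i - mix W n y i)"
  by (simp add: mix_def scaleR_diff_right sum_subtractf)

lemma mix_power_diff: "(mix W n ^^ t) (\<lambda>i. x i - y i) = (\<lambda>i. (mix W n ^^ t) x i - (mix W n ^^ t) y i)"
  by (induction t) (simp_all add: mix_diff)

lemma avg_diff_scaleR: "avg n (\<lambda>i. x i - c *\<^sub>R y i) = avg n x - c *\<^sub>R avg n y"
  by (simp add: avg_def sum_subtractf scaleR_sum_right[symmetric] scaleR_diff_right)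

lemma sum_minus_avg: "(\<Sum>i<n. y i - avg n y) = 0"
  by (cases "n = 0") (simp_all add: avg_def sum_subtractf sum_constant_scaleR)

lemma snorm2_eq_disagreement_plus_avg:
  fixes y :: "nat \<Rightarrow> 'a::real_inner"
  shows "snorm2 n y = disagreement n y + real n * (norm (avg n y))\<^sup>2"
  using snorm2_add_const[OF sum_minus_avg, of n y "avg n y"] by (simp add: disagreement_def)

lemma disagreement_le_snorm2:
  fixes y :: "nat \<Rightarrow> 'a::real_inner"
  shows "disagreement n y \<le> snorm2 n y"
  using snorm2_eq_disagreement_plus_avg[of n y] by simp

lemma finite_eigenvalues: "finite {e. is_eigenvalue W n e}"
proof -
  let ?A = "mat n n (\<lambda>(i,j). W i j) :: real mat"
  have "{e. is_eigenvalue W n e} \<subseteq> spectrum ?A"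
  proof
    fix e assume "e \<in> {e. is_eigenvalue W n e}"
    then obtain v where "\<exists>i<n. v i \<noteq> 0" "\<forall>i<n. (\<Sum>j<n. W i j * v j) = e * v i"
      unfolding is_eigenvalue_def by auto
    then have "eigenvector ?A (vec n v) e"
      unfolding eigenvector_def
      by (auto simp: scalar_prod_def atLeast0LessThan mult_mat_vec_def row_def vec_eq_iff)
    then show "e \<in> spectrum ?A" unfolding spectrum_def eigenvalue_def by auto
  qed
  moreover have "?A \<in> carrier_mat n n" by simp
  ultimately show ?thesis using card_finite_spectrum(1) finite_subset by blast
qed

text \<open>Vectors are required to vanish outside \<open>{..<n}\<close> so that the sphere is compact in the
  product topology of \<open>nat \<Rightarrow> real\<close>.\<close>
definition zero_sum_sphere :: "nat \<Rightarrow> (nat \<Rightarrow> real) set" where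
  "zero_sum_sphere n = {v. (\<forall>i\<ge>n. v i = 0) \<and> (\<Sum>i<n. v i) = 0 \<and> snorm2 n v = 1}"

lemma compact_zero_sum_sphere: "compact (zero_sum_sphere n)"
proof -
  define S where "S = (\<lambda>i::nat. if i < n then {-1..1::real} else {0})"
  have "compactin (product_topology (\<lambda>i. euclidean) UNIV) (PiE UNIV S)"
    unfolding compactin_PiE by (auto simp: S_def)
  then have box: "compact (PiE UNIV S)"
    by (simp add: euclidean_product_topology)
  have "continuous_on UNIV (\<lambda>v::nat\<Rightarrow>real. \<Sum>i<n. v i)"
    and "continuous_on UNIV (\<lambda>v::nat\<Rightarrow>real. snorm2 n v)"
    unfolding snorm2_def by (intro continuous_intros continuous_on_product_coordinates)+
  then have "closed {v::nat\<Rightarrow>real. (\<Sum>i<n. v i) = 0 \<and> snorm2 n v = 1}"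
    by (simp add: Collect_conj_eq closed_Int closed_Collect_eq continuous_on_const)
  moreover have "zero_sum_sphere n = PiE UNIV S \<inter> {v. (\<Sum>i<n. v i) = 0 \<and> snorm2 n v = 1}"
  proof (rule Set.set_eqI, rule HOL.iffI)
    fix v assume v: "v \<in> zero_sum_sphere n"
    have "\<bar>v i\<bar> \<le> 1" if "i < n" for i
    proof -
      have "(norm (v i))\<^sup>2 \<le> snorm2 n v"
        unfolding snorm2_def using that by (intro member_le_sum) auto
      then show ?thesis using v by (simp add: zero_sum_sphere_def abs_square_le_1)
    qed
    then have "v \<in> PiE UNIV S"
      using v by (auto simp: PiE_UNIV_domain S_def zero_sum_sphere_def abs_le_iff)
    then show "v \<in> PiE UNIV S \<inter> {v. (\<Sum>i<n. v i) = 0 \<and> snorm2 n v = 1}"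
      using v by (simp add: zero_sum_sphere_def)
  qed (auto simp: PiE_UNIV_domain S_def zero_sum_sphere_def split: if_splits)
  ultimately show ?thesis using compact_Int_closed[OF box] by simp
qed

lemma zero_sum_sphere_nonempty:
  assumes "2 \<le> n"
  shows "zero_sum_sphere n \<noteq> {}"
proof -
  define w where "w = (\<lambda>i::nat. if i = 0 then 1 / sqrt 2 else if i = 1 then - 1 / sqrt 2 else (0::real))"
  have sum_w: "(\<Sum>i<n. h (w i)) = h (w 0) + h (w 1)" if "h 0 = 0" for h :: "real \<Rightarrow> real"
  proof -
    have "(\<Sum>i<n. h (w i)) = (\<Sum>i\<in>{0, 1}. h (w i))"
      using assms that by (intro sum.mono_neutral_right) (auto simp: w_def)
    then show ?thesis by simp
  qed
  have "(\<Sum>i<n. w i) = 0" using sum_w[of id] by (simp add: w_def)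
  moreover have "snorm2 n w = 1"
    using sum_w[of "\<lambda>x. (norm x)\<^sup>2"] by (simp add: snorm2_def w_def power_divide)
  ultimately have "w \<in> zero_sum_sphere n"
    using assms by (simp add: zero_sum_sphere_def w_def)
  then show ?thesis by blast
qed

lemma linear_le_quadratic_imp_eq_0:
  fixes a C :: real
  assumes "\<And>\<epsilon>. 2 * \<epsilon> * a \<le> \<epsilon>\<^sup>2 * C"
  shows "a = 0"
proof -
  define C' where "C' = \<bar>C\<bar> + 1"
  have "C' > 0" "C \<le> C'" by (simp_all add: C'_def)
  have "2 * (a / C') * a \<le> (a / C')\<^sup>2 * C" by (rule assms)
  also have "\<dots> \<le> (a / C')\<^sup>2 * C'" using \<open>C \<le> C'\<close> by (rule mult_left_mono) simp
  also have "\<dots> = a\<^sup>2 / C'" using \<open>C' > 0\<close> by (simp add: power2_eq_square field_simps)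
  finally have "a\<^sup>2 / C' \<le> 0" by (simp add: power2_eq_square)
  then show ?thesis using \<open>C' > 0\<close> by (simp add: divide_le_0_iff)
qed

lemma snorm2_mix_le_sphere_maximum:
  fixes u :: "nat \<Rightarrow> real"
  assumes v: "v \<in> zero_sum_sphere n"
    and maximal: "\<And>w. w \<in> zero_sum_sphere n \<Longrightarrow> snorm2 n (mix W n w) \<le> snorm2 n (mix W n v)"
    and u: "(\<Sum>i<n. u i) = 0"
  shows "snorm2 n (mix W n u) \<le> snorm2 n (mix W n v) * snorm2 n u"
proof (cases "snorm2 n u = 0")
  case True
  then have "mix W n u = (\<lambda>i. 0)" by (simp add: snorm2_eq_0_iff mix_def)
  then show ?thesis using True by (simp add: snorm2_def)
next
  case False
  then have pos: "0 < snorm2 n u" using snorm2_nonneg[of n u] by simp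
  define c where "c = 1 / sqrt (snorm2 n u)"
  define w where "w = (\<lambda>i. if i < n then c * u i else 0)"
  have c2: "c\<^sup>2 * snorm2 n u = 1" using pos by (simp add: c_def power_divide)
  have "snorm2 n w = c\<^sup>2 * snorm2 n u"
    by (simp add: snorm2_def w_def power_mult_distrib sum_distrib_left)
  moreover have "(\<Sum>i<n. w i) = c * (\<Sum>i<n. u i)"
    by (simp add: w_def sum_distrib_left)
  ultimately have "w \<in> zero_sum_sphere n"
    using u c2 by (simp add: zero_sum_sphere_def w_def)
  moreover have "mix W n w = (\<lambda>i. c * mix W n u i)"
    by (simp add: mix_def w_def sum_distrib_left mult_ac)
  ultimately have "c\<^sup>2 * snorm2 n (mix W n u) \<le> c\<^sup>2 * snorm2 n u * snorm2 n (mix W n v)"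
    using maximal[of w] c2 by (simp add: snorm2_def power_mult_distrib sum_distrib_left)
  moreover have "0 < c\<^sup>2" using c2 by (cases "c = 0") auto
  ultimately show ?thesis by (simp add: mult.commute)
qed

section \<open>Contraction of the disagreement by the mixing matrix\<close>

locale mixing_matrix =
  fixes W :: "nat \<Rightarrow> nat \<Rightarrow> real" and n :: nat
  assumes symmetric: "\<forall>i<n. \<forall>j<n. W i j = W j i"
    and row_sums: "\<forall>i<n. (\<Sum>j<n. W i j) = 1"
    and simple_one: "simple_eigenvalue_one W n"
begin

lemma column_sums:
  assumes "j < n"
  shows "(\<Sum>i<n. W i j) = 1"
proof -
  have "(\<Sum>i<n. W i j) = (\<Sum>i<n. W j i)" using symmetric assms by (intro sum.cong) auto
  then show ?thesis using row_sums assms by simp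
qed

lemma sum_mix: "(\<Sum>i<n. mix W n y i) = (\<Sum>i<n. y i)"
proof -
  have "(\<Sum>i<n. mix W n y i) = (\<Sum>j<n. (\<Sum>i<n. W i j) *\<^sub>R y j)"
    unfolding mix_def by (subst sum.swap) (simp add: scaleR_sum_left)
  then show ?thesis using column_sums by simp
qed

lemma avg_mix: "avg n (mix W n y) = avg n y"
  by (simp add: avg_def sum_mix)

lemma avg_mix_power: "avg n ((mix W n ^^ t) y) = avg n y"
  by (induction t) (simp_all add: avg_mix)

lemma mix_minus_const: "i < n \<Longrightarrow> mix W n (\<lambda>j. y j - c) i = mix W n y i - c"
  using row_sums by (simp add: mix_def scaleR_diff_right sum_subtractf scaleR_sum_left[symmetric])

lemma sinner_mix: "sinner n (mix W n x) y = sinner n x (mix W n y)"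
proof -
  have "sinner n (mix W n x) y = (\<Sum>i<n. \<Sum>j<n. W i j * (x j \<bullet> y i))"
    by (simp add: sinner_def mix_def inner_sum_left)
  also have "\<dots> = (\<Sum>j<n. \<Sum>i<n. W j i * (x j \<bullet> y i))"
    using symmetric by (subst sum.swap) (auto intro!: sum.cong)
  also have "\<dots> = sinner n x (mix W n y)"
    by (simp add: sinner_def mix_def inner_sum_right)
  finally show ?thesis .
qed

lemma zero_sum_fixed_point_eq_0:
  fixes v :: "nat \<Rightarrow> real"
  assumes "(\<Sum>i<n. v i) = 0" and "\<And>i. i < n \<Longrightarrow> mix W n v i = v i" and "i < n"
  shows "v i = 0"
proof -
  have const: "\<forall>i<n. \<forall>j<n. v i = v j"
    using simple_one assms(2) unfolding simple_eigenvalue_one_def mix_def by simp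
  have "(\<Sum>j<n. v j) = (\<Sum>j<n. v i)"
  proof (rule sum.cong)
    fix j assume "j \<in> {..<n}"
    then show "v j = v i" using const \<open>i < n\<close> by blast
  qed simp
  then show ?thesis using assms(1,3) by simp
qed

context
  fixes v :: "nat \<Rightarrow> real"
  assumes v: "v \<in> zero_sum_sphere n"
    and maximal: "\<And>w. w \<in> zero_sum_sphere n \<Longrightarrow> snorm2 n (mix W n w) \<le> snorm2 n (mix W n v)"
begin

lemma maximizer_orthogonal:
  assumes u: "(\<Sum>i<n. u i) = 0" and orth: "sinner n u v = 0"
  shows "sinner n (mix W n (mix W n v)) u = 0"
proof (rule linear_le_quadratic_imp_eq_0)
  fix \<epsilon> :: real
  let ?s = "snorm2 n (mix W n v)"
  have "(\<Sum>i<n. v i + \<epsilon> *\<^sub>R u i) = 0"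
    using u v by (simp add: zero_sum_sphere_def sum.distrib sum_distrib_left[symmetric])
  then have "snorm2 n (mix W n (\<lambda>i. v i + \<epsilon> *\<^sub>R u i)) \<le> ?s * snorm2 n (\<lambda>i. v i + \<epsilon> *\<^sub>R u i)"
    by (intro snorm2_mix_le_sphere_maximum[OF v maximal])
  then have "?s + 2 * \<epsilon> * sinner n (mix W n v) (mix W n u) + \<epsilon>\<^sup>2 * snorm2 n (mix W n u)
      \<le> ?s * (1 + \<epsilon>\<^sup>2 * snorm2 n u)"
    using v orth unfolding mix_add_scaleR snorm2_add_scaleR
    by (simp add: zero_sum_sphere_def sinner_commute)
  then show "2 * \<epsilon> * sinner n (mix W n (mix W n v)) u \<le> \<epsilon>\<^sup>2 * (?s * snorm2 n u - snorm2 n (mix W n u))"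
    by (simp add: sinner_mix algebra_simps)
qed

lemma maximizer_mix_mix:
  assumes "i < n"
  shows "mix W n (mix W n v) i = snorm2 n (mix W n v) * v i"
proof -
  define c where "c = sinner n (mix W n (mix W n v)) v"
  define u where "u = (\<lambda>i. mix W n (mix W n v) i - c * v i)"
  have v_sum: "(\<Sum>i<n. v i) = 0" and v_norm: "sinner n v v = 1"
    using v by (simp_all add: zero_sum_sphere_def snorm2_eq_sinner)
  have u_sum: "(\<Sum>i<n. u i) = 0"
    using v_sum by (simp add: u_def sum_subtractf sum_mix sum_distrib_left[symmetric])
  have "sinner n u v = sinner n (mix W n (mix W n v)) v - c * sinner n v v"
    by (simp add: u_def sinner_def sum_subtractf sum_distrib_left algebra_simps)
  then have u_orth: "sinner n u v = 0"
    using v_norm by (simp add: c_def)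
  have "snorm2 n u = sinner n (mix W n (mix W n v)) u - c * sinner n v u"
    by (simp add: snorm2_eq_sinner u_def sinner_def sum_subtractf sum_distrib_left algebra_simps)
  also have "\<dots> = 0"
    using maximizer_orthogonal[OF u_sum u_orth] u_orth by (simp add: sinner_commute)
  finally have "u i = 0" using assms by (simp add: snorm2_eq_0_iff)
  moreover have "c = snorm2 n (mix W n v)"
    by (simp add: c_def sinner_mix snorm2_eq_sinner)
  ultimately show ?thesis by (simp add: u_def)
qed

end

text \<open>If \<open>v\<close> is not itself an eigenvector for \<open>\<sigma>\<close>, then \<open>W v - \<sigma> v\<close> is one for \<open>-\<sigma>\<close>.\<close>
lemma eigenvalue_of_mix_square:
  fixes v :: "nat \<Rightarrow> real"
  assumes v_sum: "(\<Sum>i<n. v i) = 0" and v_nz: "\<exists>i<n. v i \<noteq> 0" and "0 \<le> \<sigma>"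
    and square: "\<And>i. i < n \<Longrightarrow> mix W n (mix W n v) i = \<sigma>\<^sup>2 * v i"
  shows "\<exists>e. is_eigenvalue W n e \<and> e \<noteq> 1 \<and> \<bar>e\<bar> = \<sigma>"
proof (cases "\<forall>i<n. mix W n v i = \<sigma> * v i")
  case True
  then have "is_eigenvalue W n \<sigma>"
    using v_nz unfolding is_eigenvalue_def mix_def by auto
  moreover have "\<sigma> \<noteq> 1"
    using True v_nz zero_sum_fixed_point_eq_0[OF v_sum] by fastforce
  ultimately show ?thesis using \<open>0 \<le> \<sigma>\<close> by auto
next
  case False
  define w where "w = (\<lambda>i. mix W n v i - \<sigma> * v i)"
  have "mix W n w i = - \<sigma> * w i" if "i < n" for i
  proof -
    have "mix W n w i = mix W n (mix W n v) i - \<sigma> * mix W n v i"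
      by (simp add: w_def mix_def sum_subtractf sum_distrib_left right_diff_distrib mult_ac)
    also have "\<dots> = - \<sigma> * w i"
      using square[OF that] by (simp add: w_def power2_eq_square algebra_simps)
    finally show ?thesis .
  qed
  moreover have "\<exists>i<n. w i \<noteq> 0" using False by (auto simp: w_def)
  ultimately have "is_eigenvalue W n (- \<sigma>)"
    unfolding is_eigenvalue_def mix_def by auto
  then show ?thesis using \<open>0 \<le> \<sigma>\<close> by (intro exI[of _ "- \<sigma>"]) auto
qed

lemma snorm2_mix_zero_sum_real:
  fixes v :: "nat \<Rightarrow> real"
  assumes v_sum: "(\<Sum>i<n. v i) = 0"
  shows "snorm2 n (mix W n v) \<le> (second_eig_mag W n)\<^sup>2 * snorm2 n v"
proof (cases "n \<le> 1")
  case True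
  then have "mix W n v = (\<lambda>i. 0)"
    using v_sum by (cases n) (auto simp: mix_def)
  then show ?thesis using snorm2_nonneg[of n v] by (simp add: snorm2_def)
next
  case False
  then have "2 \<le> n" by simp
  moreover have "continuous_on UNIV (\<lambda>u. snorm2 n (mix W n u))"
    unfolding snorm2_def mix_def by (intro continuous_intros continuous_on_product_coordinates)
  then have "continuous_on (zero_sum_sphere n) (\<lambda>u. snorm2 n (mix W n u))"
    by (rule continuous_on_subset) simp
  ultimately obtain u where u: "u \<in> zero_sum_sphere n"
    and maximal: "\<And>w. w \<in> zero_sum_sphere n \<Longrightarrow> snorm2 n (mix W n w) \<le> snorm2 n (mix W n u)"
    using continuous_attains_sup[OF compact_zero_sum_sphere zero_sum_sphere_nonempty] by blast
  define \<sigma> where "\<sigma> = sqrt (snorm2 n (mix W n u))"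
  have \<sigma>: "0 \<le> \<sigma>" "\<sigma>\<^sup>2 = snorm2 n (mix W n u)"
    by (simp_all add: \<sigma>_def snorm2_nonneg)
  have "(\<Sum>i<n. u i) = 0" and "snorm2 n u \<noteq> 0"
    using u by (simp_all add: zero_sum_sphere_def)
  then have "(\<Sum>i<n. u i) = 0" "\<exists>i<n. u i \<noteq> 0"
    by (simp_all add: snorm2_eq_0_iff)
  moreover have "\<And>i. i < n \<Longrightarrow> mix W n (mix W n u) i = \<sigma>\<^sup>2 * u i"
    using maximizer_mix_mix[OF u maximal] \<sigma>(2) by simp
  ultimately obtain e where e: "is_eigenvalue W n e" "e \<noteq> 1" "\<bar>e\<bar> = \<sigma>"
    using eigenvalue_of_mix_square \<sigma>(1) by blast
  have "finite (abs ` {e. is_eigenvalue W n e \<and> e \<noteq> 1})"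
    using finite_eigenvalues by (auto intro: finite_subset)
  then have "\<sigma> \<le> second_eig_mag W n"
    unfolding second_eig_mag_def using e by (intro Max_ge) force+
  then have "snorm2 n (mix W n u) \<le> (second_eig_mag W n)\<^sup>2"
    using power_mono[OF _ \<sigma>(1), of _ 2] \<sigma>(2) by simp
  then have "snorm2 n (mix W n u) * snorm2 n v \<le> (second_eig_mag W n)\<^sup>2 * snorm2 n v"
    by (rule mult_right_mono) (rule snorm2_nonneg)
  then show ?thesis
    using snorm2_mix_le_sphere_maximum[OF u maximal v_sum] by linarith
qed

lemma snorm2_mix_zero_sum:
  fixes z :: "nat \<Rightarrow> 'a::euclidean_space"
  assumes z_sum: "(\<Sum>i<n. z i) = 0"
  shows "snorm2 n (mix W n z) \<le> (second_eig_mag W n)\<^sup>2 * snorm2 n z"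
proof -
  have norm_coordinates: "(norm x)\<^sup>2 = (\<Sum>b\<in>Basis. (x \<bullet> b)\<^sup>2)" for x :: 'a
    unfolding power2_norm_eq_inner by (subst euclidean_inner) (simp add: power2_eq_square)
  have coordinates: "snorm2 n x = (\<Sum>b\<in>Basis. snorm2 n (\<lambda>i. x i \<bullet> b))" for x :: "nat \<Rightarrow> 'a"
    unfolding snorm2_def norm_coordinates by (subst sum.swap) simp
  have mix_coordinate: "(\<lambda>i. mix W n z i \<bullet> b) = mix W n (\<lambda>i. z i \<bullet> b)" for b
    by (simp add: mix_def inner_sum_left)
  have "snorm2 n (mix W n z) = (\<Sum>b\<in>Basis. snorm2 n (mix W n (\<lambda>i. z i \<bullet> b)))"
    unfolding coordinates[of "mix W n z"] mix_coordinate ..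
  also have "\<dots> \<le> (\<Sum>b\<in>Basis. (second_eig_mag W n)\<^sup>2 * snorm2 n (\<lambda>i. z i \<bullet> b))"
  proof (rule sum_mono, rule snorm2_mix_zero_sum_real)
    show "(\<Sum>i<n. z i \<bullet> b) = 0" for b
      using z_sum by (simp add: inner_sum_left[symmetric])
  qed
  also have "\<dots> = (second_eig_mag W n)\<^sup>2 * snorm2 n z"
    by (simp add: coordinates[of z] sum_distrib_left)
  finally show ?thesis .
qed

lemma disagreement_mix:
  fixes y :: "nat \<Rightarrow> 'a::euclidean_space"
  shows "disagreement n (mix W n y) \<le> (second_eig_mag W n)\<^sup>2 * disagreement n y"
proof -
  have "disagreement n (mix W n y) = snorm2 n (mix W n (\<lambda>j. y j - avg n y))"
    unfolding disagreement_def avg_mix snorm2_def by (simp add: mix_minus_const)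
  then show ?thesis
    unfolding disagreement_def using snorm2_mix_zero_sum[OF sum_minus_avg] by simp
qed

lemma disagreement_mix_power:
  fixes y :: "nat \<Rightarrow> 'a::euclidean_space"
  shows "disagreement n ((mix W n ^^ t) y) \<le> (second_eig_mag W n) ^ (2 * t) * disagreement n y"
proof (induction t)
  case (Suc t)
  have "disagreement n ((mix W n ^^ Suc t) y) \<le> (second_eig_mag W n)\<^sup>2 * disagreement n ((mix W n ^^ t) y)"
    using disagreement_mix by simp
  also have "\<dots> \<le> (second_eig_mag W n)\<^sup>2 * ((second_eig_mag W n) ^ (2 * t) * disagreement n y)"
    using Suc.IH by (rule mult_left_mono) simp
  finally show ?case by (simp add: power_add power2_eq_square mult_ac)
qed simp

lemma snorm2_mix_power_le:
  fixes y :: "nat \<Rightarrow> 'a::euclidean_space"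
  assumes "\<bar>second_eig_mag W n\<bar> \<le> 1"
  shows "snorm2 n ((mix W n ^^ t) y) \<le> snorm2 n y"
proof -
  have "(second_eig_mag W n) ^ (2 * t) \<le> 1"
    using assms by (simp add: power_mult power_le_one_iff abs_square_le_1)
  then have "(second_eig_mag W n) ^ (2 * t) * disagreement n y \<le> 1 * disagreement n y"
    by (rule mult_right_mono) (simp add: disagreement_def snorm2_nonneg)
  then have "disagreement n ((mix W n ^^ t) y) \<le> disagreement n y"
    using disagreement_mix_power[of t y] by simp
  then show ?thesis
    using snorm2_eq_disagreement_plus_avg[of n y] snorm2_eq_disagreement_plus_avg[of n "(mix W n ^^ t) y"]
    by (simp add: avg_mix_power)
qed

end

section \<open>Scalar recursions\<close>

lemma young_inequality_norm:
  fixes a b :: "'a::real_inner"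
  assumes "0 < \<epsilon>"
  shows "(norm (a + b))\<^sup>2 \<le> (1 + \<epsilon>) * (norm a)\<^sup>2 + (1 + 1 / \<epsilon>) * (norm b)\<^sup>2"
proof -
  have "2 * (norm a * norm b) \<le> \<epsilon> * (norm a)\<^sup>2 + (norm b)\<^sup>2 / \<epsilon>"
  proof -
    have "0 \<le> (\<epsilon> * norm a - norm b)\<^sup>2 / \<epsilon>" using assms by simp
    also have "\<dots> = \<epsilon> * (norm a)\<^sup>2 - 2 * (norm a * norm b) + (norm b)\<^sup>2 / \<epsilon>"
      using assms by (simp add: power2_diff field_simps power2_eq_square)
    finally show ?thesis by simp
  qed
  moreover have "(norm (a + b))\<^sup>2 \<le> (norm a + norm b)\<^sup>2"
    by (rule power_mono[OF norm_triangle_ineq]) simp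
  ultimately show ?thesis by (simp add: power2_sum algebra_simps)
qed

lemma affine_recurrence_bound:
  fixes e :: "nat \<Rightarrow> real"
  assumes step: "\<And>k. e (Suc k) \<le> c * e k + B" and "0 \<le> c" "c < 1" "0 \<le> B"
  shows "e k \<le> c ^ k * e 0 + B / (1 - c)"
proof (induction k)
  case (Suc k)
  have "e (Suc k) \<le> c * (c ^ k * e 0 + B / (1 - c)) + B"
    using step[of k] mult_left_mono[OF Suc.IH \<open>0 \<le> c\<close>] by linarith
  also have "\<dots> = c ^ Suc k * e 0 + B / (1 - c)"
    using \<open>c < 1\<close> by (simp add: field_simps)
  finally show ?case .
qed (use assms in simp)

text \<open>The constant \<open>(\<nu> + 4) / \<nu>\<close> in \<open>D\<close> bounds the accumulated drift \<open>2 q / (1 - q)\<close> of the iterates.\<close>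
lemma drift_constant_bound:
  fixes \<nu> :: real
  assumes "0 < \<nu>" "\<nu> \<le> 1"
  shows "2 * sqrt (1 - \<nu>) / (1 - sqrt (1 - \<nu>)) + 1 \<le> (\<nu> + 4) / \<nu>"
proof -
  define q where "q = sqrt (1 - \<nu>)"
  have q: "0 \<le> q" "q < 1" "q\<^sup>2 = 1 - \<nu>" using assms by (simp_all add: q_def)
  have "q\<^sup>2 * (\<nu> + 2)\<^sup>2 = 4 - \<nu>\<^sup>2 * (3 + \<nu>)"
    unfolding q(3) by (simp add: power2_eq_square algebra_simps)
  also have "\<dots> \<le> 2\<^sup>2"
    using assms by simp
  finally have "(q * (\<nu> + 2))\<^sup>2 \<le> 2\<^sup>2"
    by (simp only: power_mult_distrib)
  then have "q * (\<nu> + 2) \<le> 2"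
    by (rule power2_le_imp_le) simp
  then have "2 * q / (1 - q) \<le> 4 / \<nu>"
    using q assms by (simp add: field_simps)
  then show ?thesis
    using assms by (simp add: q_def add_divide_distrib)
qed

lemma linear_rate_from_one_step:
  fixes r :: "nat \<Rightarrow> real" and \<alpha> c C :: real
  assumes step: "\<forall>\<delta>>0. \<forall>k.
      (r (Suc k))\<^sup>2 \<le> (1 - \<alpha> * c + \<alpha> * \<delta> - \<alpha>\<^sup>2 * \<delta> * c) * (r k)\<^sup>2 + \<alpha> * (\<alpha> + 1 / \<delta>) * C\<^sup>2"
    and r: "\<And>k. 0 \<le> r k" and "0 < \<alpha>" "0 < c" "\<alpha> * c < 1" "0 \<le> C"
  shows "let \<delta> = c / (2 * (1 - \<alpha> * c)); c1 = sqrt (1 - \<alpha> * c + \<alpha> * \<delta> - \<alpha>\<^sup>2 * \<delta> * c)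
         in c1 = sqrt (1 - \<alpha> * c / 2) \<and> 0 < c1 \<and> c1 < 1 \<and>
            (\<forall>k. r k \<le> c1 ^ k * r 0 + C / c * sqrt (2 * (2 - \<alpha> * c)))"
proof -
  define \<delta> where "\<delta> = c / (2 * (1 - \<alpha> * c))"
  define c1 where "c1 = sqrt (1 - \<alpha> * c + \<alpha> * \<delta> - \<alpha>\<^sup>2 * \<delta> * c)"
  define T where "T = C / c * sqrt (2 * (2 - \<alpha> * c))"
  have "0 < \<delta>" using assms by (simp add: \<delta>_def)
  have rate: "1 - \<alpha> * c + \<alpha> * \<delta> - \<alpha>\<^sup>2 * \<delta> * c = 1 - \<alpha> * c / 2"
  proof -
    have "\<alpha> * \<delta> - \<alpha>\<^sup>2 * \<delta> * c = \<alpha> * \<delta> * (1 - \<alpha> * c)" by (simp add: power2_eq_square algebra_simps)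
    also have "\<dots> = \<alpha> * c / 2" using assms by (simp add: \<delta>_def field_simps)
    finally show ?thesis by simp
  qed
  have "0 < \<alpha> * c" using assms by simp
  then have c1: "c1 = sqrt (1 - \<alpha> * c / 2)" "0 < c1" "c1 < 1" "c1\<^sup>2 = 1 - \<alpha> * c / 2"
    using \<open>\<alpha> * c < 1\<close> by (simp_all add: c1_def rate)
  have T: "0 \<le> T" "\<alpha> * (\<alpha> + 1 / \<delta>) * C\<^sup>2 / (1 - c1\<^sup>2) = T\<^sup>2"
  proof -
    show "0 \<le> T" using assms by (simp add: T_def)
    have inv: "\<alpha> + 1 / \<delta> = (2 - \<alpha> * c) / c" using assms by (simp add: \<delta>_def field_simps)
    have gap: "1 - c1\<^sup>2 = \<alpha> * c / 2" using c1(4) by simp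
    have "\<alpha> * (\<alpha> + 1 / \<delta>) * C\<^sup>2 / (1 - c1\<^sup>2) = \<alpha> * ((2 - \<alpha> * c) / c) * C\<^sup>2 / (\<alpha> * c / 2)"
      by (simp only: inv gap)
    also have "\<dots> = 2 * (2 - \<alpha> * c) * C\<^sup>2 / c\<^sup>2"
      using \<open>0 < \<alpha>\<close> \<open>0 < c\<close> by (simp add: field_simps power2_eq_square)
    also have "\<dots> = T\<^sup>2"
      using \<open>\<alpha> * c < 1\<close> by (simp add: T_def power_mult_distrib power_divide)
    finally show "\<alpha> * (\<alpha> + 1 / \<delta>) * C\<^sup>2 / (1 - c1\<^sup>2) = T\<^sup>2" .
  qed
  have "r k \<le> c1 ^ k * r 0 + T" for k
  proof -
    have "(r k)\<^sup>2 \<le> (c1\<^sup>2) ^ k * (r 0)\<^sup>2 + T\<^sup>2"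
      using affine_recurrence_bound[where e="\<lambda>k. (r k)\<^sup>2", OF step[rule_format, OF \<open>0 < \<delta>\<close>, unfolded rate c1(4)[symmetric]]]
        c1 T \<open>0 < \<alpha>\<close> \<open>0 < \<delta>\<close> by (simp add: power_less_one_iff)
    also have "\<dots> = (c1 ^ k * r 0)\<^sup>2 + T\<^sup>2"
      unfolding power_mult_distrib by (metis power_mult mult.commute)
    also have "\<dots> \<le> (c1 ^ k * r 0 + T)\<^sup>2"
      using c1 T r[of 0] by (simp add: power2_sum)
    finally have "(r k)\<^sup>2 \<le> (c1 ^ k * r 0 + T)\<^sup>2" .
    moreover have "0 \<le> c1 ^ k * r 0 + T"
      using c1(2) T(1) r[of 0] by simp
    ultimately show ?thesis by (rule power2_le_imp_le)
  qed
  then have "c1 = sqrt (1 - \<alpha> * c / 2) \<and> 0 < c1 \<and> c1 < 1 \<and> (\<forall>k. r k \<le> c1 ^ k * r 0 + T)"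
    using c1(1-3) by blast
  then show ?thesis
    unfolding Let_def \<delta>_def[symmetric] c1_def[symmetric] T_def[symmetric] .
qed

section \<open>Iterates of NEAR-DGD\<close>

lemma avg_gradient_disagreement_bound:
  fixes g :: "nat \<Rightarrow> 'a::real_normed_vector \<Rightarrow> 'a"
  assumes lips: "\<And>i. i < n \<Longrightarrow> (Lc i)-lipschitz_on UNIV (g i)" and le: "\<And>i. i < n \<Longrightarrow> Lc i \<le> L"
    and "0 < n"
  shows "(norm (avg n (\<lambda>i. g i (avg n x)) - avg n (\<lambda>i. g i (x i))))\<^sup>2 \<le> L\<^sup>2 * disagreement n x"
proof -
  have "avg n (\<lambda>i. g i (avg n x)) - avg n (\<lambda>i. g i (x i)) = (1 / real n) *\<^sub>R (\<Sum>i<n. g i (avg n x) - g i (x i))"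
    by (simp add: avg_def sum_subtractf scaleR_diff_right)
  then have "(norm (avg n (\<lambda>i. g i (avg n x)) - avg n (\<lambda>i. g i (x i))))\<^sup>2
      = (norm (\<Sum>i<n. g i (avg n x) - g i (x i)))\<^sup>2 / (real n)\<^sup>2"
    by (simp add: power_divide)
  also have "\<dots> \<le> (\<Sum>i<n. L * norm (x i - avg n x))\<^sup>2 / (real n)\<^sup>2"
  proof (intro divide_right_mono power_mono)
    have "norm (g i (avg n x) - g i (x i)) \<le> L * norm (x i - avg n x)" if "i < n" for i
    proof -
      have "norm (g i (avg n x) - g i (x i)) \<le> Lc i * norm (x i - avg n x)"
        using lips[OF that] unfolding lipschitz_on_def dist_norm by (metis UNIV_I norm_minus_commute)
      also have "\<dots> \<le> L * norm (x i - avg n x)"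
        using le[OF that] by (rule mult_right_mono) simp
      finally show ?thesis .
    qed
    then show "norm (\<Sum>i<n. g i (avg n x) - g i (x i)) \<le> (\<Sum>i<n. L * norm (x i - avg n x))"
      by (intro order_trans[OF norm_sum] sum_mono) simp
  qed simp_all
  also have "\<dots> \<le> real n * (\<Sum>i<n. (L * norm (x i - avg n x))\<^sup>2) / (real n)\<^sup>2"
    using Cauchy_Schwarz_ineq_sum[of "\<lambda>i. 1" "\<lambda>i. L * norm (x i - avg n x)" "{..<n}"]
    by (intro divide_right_mono) simp_all
  also have "\<dots> = L\<^sup>2 * disagreement n x / real n"
  proof -
    have "(\<Sum>i<n. (L * norm (x i - avg n x))\<^sup>2) = L\<^sup>2 * disagreement n x"
      by (simp add: disagreement_def snorm2_def power_mult_distrib sum_distrib_left)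
    then show ?thesis using \<open>0 < n\<close> by (simp add: power2_eq_square)
  qed
  also have "\<dots> \<le> L\<^sup>2 * disagreement n x / 1"
    using \<open>0 < n\<close> by (intro divide_left_mono) (simp_all add: disagreement_def snorm2_nonneg)
  finally show ?thesis by simp
qed

context mixing_matrix
begin

lemma near_dgd_y_bounded:
  fixes g :: "nat \<Rightarrow> 'a::euclidean_space \<Rightarrow> 'a"
  assumes nonexpansive: "\<bar>second_eig_mag W n\<bar> \<le> 1"
    and contract: "\<And>i z. i < n \<Longrightarrow> (norm (z - \<alpha> *\<^sub>R g i z - u i))\<^sup>2 \<le> (1 - \<nu>) * (norm (z - u i))\<^sup>2"
    and "0 < \<nu>" "\<nu> \<le> 1"
  shows "snorm n (near_dgd_y W n t \<alpha> g y0 k) \<le> snorm n (\<lambda>i. y0 i - u i) + (\<nu> + 4) / \<nu> * snorm n u"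
proof -
  define y where "y = near_dgd_y W n t \<alpha> g y0"
  define e where "e = (\<lambda>k. snorm n (\<lambda>i. y k i - u i))"
  define q where "q = sqrt (1 - \<nu>)"
  define U where "U = snorm n u"
  have q: "0 \<le> q" "q < 1" using assms by (simp_all add: q_def)
  have mix_le: "snorm n ((mix W n ^^ t) z) \<le> snorm n z" for z :: "nat \<Rightarrow> 'a"
    unfolding snorm_eq_sqrt_snorm2 using snorm2_mix_power_le[OF nonexpansive] by simp
  have step: "e (Suc k) \<le> q * e k + 2 * q * U" for k
  proof -
    define x where "x = (mix W n ^^ t) (y k)"
    have "y (Suc k) = (\<lambda>i. x i - \<alpha> *\<^sub>R g i (x i))"
      by (simp add: y_def x_def Let_def)
    then have "snorm2 n (\<lambda>i. y (Suc k) i - u i) \<le> (1 - \<nu>) * snorm2 n (\<lambda>i. x i - u i)"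
      unfolding snorm2_def sum_distrib_left by (intro sum_mono) (simp add: contract)
    then have "e (Suc k) \<le> q * snorm n (\<lambda>i. x i - u i)"
      unfolding e_def snorm_eq_sqrt_snorm2 q_def using assms by (simp add: real_sqrt_mult[symmetric])
    also have "snorm n (\<lambda>i. x i - u i) \<le> e k + 2 * U"
    proof -
      have "(\<lambda>i. x i - u i) = (\<lambda>i. (mix W n ^^ t) (\<lambda>j. y k j - u j) i + ((mix W n ^^ t) u i - u i))"
        by (simp add: x_def mix_power_diff)
      then have "snorm n (\<lambda>i. x i - u i)
          \<le> snorm n ((mix W n ^^ t) (\<lambda>j. y k j - u j)) + snorm n (\<lambda>i. (mix W n ^^ t) u i - u i)"
        by (simp only: snorm_add_le)
      moreover have "snorm n (\<lambda>i. (mix W n ^^ t) u i - u i) \<le> snorm n ((mix W n ^^ t) u) + U"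
        unfolding U_def by (rule snorm_diff_le)
      ultimately show ?thesis
        using mix_le[of "\<lambda>j. y k j - u j"] mix_le[of u] unfolding e_def U_def by linarith
    qed
    then have "q * snorm n (\<lambda>i. x i - u i) \<le> q * (e k + 2 * U)"
      by (rule mult_left_mono[OF _ q(1)])
    finally show ?thesis by (simp add: algebra_simps)
  qed
  have "e k \<le> q ^ k * e 0 + 2 * q * U / (1 - q)"
    using affine_recurrence_bound[where e=e, OF step] q by (simp add: U_def snorm_nonneg)
  also have "q ^ k * e 0 \<le> e 0"
    using q by (simp add: e_def snorm_nonneg mult_left_le_one_le power_le_one)
  finally have "snorm n (y k) \<le> e 0 + (2 * q / (1 - q) + 1) * U"
    using snorm_add_le[of n "\<lambda>i. y k i - u i" u] unfolding e_def U_def by (simp add: algebra_simps)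
  also have "\<dots> \<le> e 0 + (\<nu> + 4) / \<nu> * U"
    using mult_right_mono[OF drift_constant_bound[OF assms(3,4)] snorm_nonneg[of n u]]
    unfolding q_def U_def by simp
  finally show ?thesis by (simp add: y_def e_def U_def)
qed

lemma disagreement_near_dgd_x:
  fixes g :: "nat \<Rightarrow> 'a::euclidean_space \<Rightarrow> 'a"
  assumes "snorm n (near_dgd_y W n t \<alpha> g y0 k) \<le> D"
  shows "disagreement n (near_dgd_x W n t \<alpha> g y0 k) \<le> second_eig_mag W n ^ (2 * t) * D\<^sup>2"
proof -
  define y where "y = near_dgd_y W n t \<alpha> g y0 k"
  have \<beta>_power: "0 \<le> second_eig_mag W n ^ (2 * t)" by (simp add: power_mult)
  have "disagreement n (near_dgd_x W n t \<alpha> g y0 k) \<le> second_eig_mag W n ^ (2 * t) * disagreement n y"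
    unfolding near_dgd_x_def y_def by (rule disagreement_mix_power)
  also have "\<dots> \<le> second_eig_mag W n ^ (2 * t) * snorm2 n y"
    using disagreement_le_snorm2 \<beta>_power by (rule mult_left_mono)
  also have "\<dots> \<le> second_eig_mag W n ^ (2 * t) * D\<^sup>2"
    using assms \<beta>_power unfolding snorm_power2[symmetric] y_def
    by (intro mult_left_mono power_mono) (simp_all add: snorm_nonneg)
  finally show ?thesis .
qed

lemma near_dgd_avg_step:
  fixes g :: "nat \<Rightarrow> 'a::euclidean_space \<Rightarrow> 'a"
  assumes "0 < n" "0 < \<alpha>" "0 < \<delta>"
    and lips: "\<And>i. i < n \<Longrightarrow> (Lc i)-lipschitz_on UNIV (g i)" and le: "\<And>i. i < n \<Longrightarrow> Lc i \<le> L"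
    and contract: "\<And>z. (norm (z - \<alpha> *\<^sub>R avg n (\<lambda>i. g i z) - xstar))\<^sup>2 \<le> (1 - \<alpha> * c) * (norm (z - xstar))\<^sup>2"
    and bounded: "snorm n (near_dgd_y W n t \<alpha> g y0 k) \<le> D"
  shows "(norm (avg n (near_dgd_x W n t \<alpha> g y0 (Suc k)) - xstar))\<^sup>2
      \<le> (1 - \<alpha> * c + \<alpha> * \<delta> - \<alpha>\<^sup>2 * \<delta> * c) * (norm (avg n (near_dgd_x W n t \<alpha> g y0 k) - xstar))\<^sup>2
        + \<alpha> * (\<alpha> + 1 / \<delta>) * D\<^sup>2 * L\<^sup>2 * second_eig_mag W n ^ (2 * t)"
proof -
  define x where "x = near_dgd_x W n t \<alpha> g y0 k"
  define \<beta> where "\<beta> = second_eig_mag W n"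
  define a where "a = avg n x - \<alpha> *\<^sub>R avg n (\<lambda>i. g i (avg n x)) - xstar"
  define b where "b = \<alpha> *\<^sub>R (avg n (\<lambda>i. g i (avg n x)) - avg n (\<lambda>i. g i (x i)))"
  have "avg n (near_dgd_x W n t \<alpha> g y0 (Suc k)) = avg n x - \<alpha> *\<^sub>R avg n (\<lambda>i. g i (x i))"
    by (simp add: near_dgd_x_def avg_mix_power x_def Let_def avg_diff_scaleR)
  then have next_avg: "avg n (near_dgd_x W n t \<alpha> g y0 (Suc k)) - xstar = a + b"
    by (simp add: a_def b_def algebra_simps)
  have "(norm b)\<^sup>2 = \<alpha>\<^sup>2 * (norm (avg n (\<lambda>i. g i (avg n x)) - avg n (\<lambda>i. g i (x i))))\<^sup>2"
    using \<open>0 < \<alpha>\<close> by (simp add: b_def power_mult_distrib)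
  also have "\<dots> \<le> \<alpha>\<^sup>2 * (L\<^sup>2 * disagreement n x)"
    using avg_gradient_disagreement_bound[OF lips le \<open>0 < n\<close>] zero_le_power2
    by (rule mult_left_mono)
  also have "\<dots> \<le> \<alpha>\<^sup>2 * (L\<^sup>2 * (\<beta> ^ (2 * t) * D\<^sup>2))"
    using disagreement_near_dgd_x[OF bounded] zero_le_power2 zero_le_power2
    unfolding x_def \<beta>_def by (intro mult_left_mono)
  finally have "(norm b)\<^sup>2 \<le> \<alpha>\<^sup>2 * (L\<^sup>2 * (\<beta> ^ (2 * t) * D\<^sup>2))" .
  have "(norm (a + b))\<^sup>2 \<le> (1 + \<alpha> * \<delta>) * (norm a)\<^sup>2 + (1 + 1 / (\<alpha> * \<delta>)) * (norm b)\<^sup>2"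
    using assms by (intro young_inequality_norm) simp
  also have "\<dots> \<le> (1 + \<alpha> * \<delta>) * ((1 - \<alpha> * c) * (norm (avg n x - xstar))\<^sup>2)
      + (1 + 1 / (\<alpha> * \<delta>)) * (\<alpha>\<^sup>2 * (L\<^sup>2 * (\<beta> ^ (2 * t) * D\<^sup>2)))"
    using contract[of "avg n x"] \<open>(norm b)\<^sup>2 \<le> _\<close> assms
    by (intro add_mono mult_left_mono) (simp_all add: a_def)
  also have "\<dots> = (1 - \<alpha> * c + \<alpha> * \<delta> - \<alpha>\<^sup>2 * \<delta> * c) * (norm (avg n x - xstar))\<^sup>2
      + \<alpha> * (\<alpha> + 1 / \<delta>) * D\<^sup>2 * L\<^sup>2 * \<beta> ^ (2 * t)"
    using assms by (simp add: field_simps power2_eq_square)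
  finally show ?thesis unfolding next_avg x_def \<beta>_def .
qed

lemma near_dgd_avg_recursion:
  fixes g :: "nat \<Rightarrow> 'a::euclidean_space \<Rightarrow> 'a"
  assumes "0 < n" "0 < \<alpha>" "\<bar>second_eig_mag W n\<bar> \<le> 1"
    and agent: "\<And>i z. i < n \<Longrightarrow> (norm (z - \<alpha> *\<^sub>R g i z - u i))\<^sup>2 \<le> (1 - \<nu>) * (norm (z - u i))\<^sup>2"
    and "0 < \<nu>" "\<nu> \<le> 1"
    and lips: "\<forall>i<n. (Lc i)-lipschitz_on UNIV (g i)" and le: "\<And>i. i < n \<Longrightarrow> Lc i \<le> L"
    and contract: "\<And>z. (norm (z - \<alpha> *\<^sub>R avg n (\<lambda>i. g i z) - xstar))\<^sup>2 \<le> (1 - \<alpha> * c) * (norm (z - xstar))\<^sup>2"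
    and D: "D = snorm n (\<lambda>i. y0 i - u i) + (\<nu> + 4) / \<nu> * snorm n u"
  shows "\<forall>\<delta>>0. \<forall>k. (norm (avg n (near_dgd_x W n t \<alpha> g y0 (Suc k)) - xstar))\<^sup>2
      \<le> (1 - \<alpha> * c + \<alpha> * \<delta> - \<alpha>\<^sup>2 * \<delta> * c) * (norm (avg n (near_dgd_x W n t \<alpha> g y0 k) - xstar))\<^sup>2
        + \<alpha> * (\<alpha> + 1 / \<delta>) * D\<^sup>2 * L\<^sup>2 * second_eig_mag W n ^ (2 * t)"
proof (intro allI impI)
  fix \<delta> :: real and k assume "0 < \<delta>"
  have "snorm n (near_dgd_y W n t \<alpha> g y0 k) \<le> D"
    unfolding D using near_dgd_y_bounded[where g=g and u=u, OF assms(3) agent assms(5,6)] .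
  then show "(norm (avg n (near_dgd_x W n t \<alpha> g y0 (Suc k)) - xstar))\<^sup>2
      \<le> (1 - \<alpha> * c + \<alpha> * \<delta> - \<alpha>\<^sup>2 * \<delta> * c) * (norm (avg n (near_dgd_x W n t \<alpha> g y0 k) - xstar))\<^sup>2
        + \<alpha> * (\<alpha> + 1 / \<delta>) * D\<^sup>2 * L\<^sup>2 * second_eig_mag W n ^ (2 * t)"
    using near_dgd_avg_step[OF assms(1,2) \<open>0 < \<delta>\<close> lips[rule_format] le contract] by simp
qed

end

lemma near_dgd_agent_contraction:
  fixes f :: "nat \<Rightarrow> 'a::euclidean_space \<Rightarrow> real"
  assumes "0 < n" and qb: "\<And>i. i < n \<Longrightarrow> quadratically_bounded (\<mu> i) (Lc i) (f i) (g i)"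
    and \<mu>: "\<forall>i<n. 0 < \<mu> i" and min: "\<forall>i<n. \<forall>z. f i (ustar i) \<le> f i z"
    and "0 < \<alpha>" "\<alpha> \<le> 1 / Max (Lc ` {..<n})"
    and \<nu>: "\<nu> = 2 * \<alpha> * Min ((\<lambda>i. \<mu> i * Lc i / (\<mu> i + Lc i)) ` {..<n})"
  shows "0 < \<nu>" "\<nu> \<le> 1"
    and "\<And>i z. i < n \<Longrightarrow> (norm (z - \<alpha> *\<^sub>R g i z - ustar i))\<^sup>2 \<le> (1 - \<nu>) * (norm (z - ustar i))\<^sup>2"
proof -
  have Lc: "\<mu> i \<le> Lc i" "0 < Lc i" "\<alpha> \<le> 2 / (\<mu> i + Lc i)" if "i < n" for i
  proof -
    show "\<mu> i \<le> Lc i" using quadratically_bounded_le[OF qb[OF that]] .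
    then show "0 < Lc i" using \<mu>[rule_format, OF that] by simp
    have "Lc i \<le> Max (Lc ` {..<n})" using that by (intro Max_ge) auto
    then have "\<alpha> * Lc i \<le> \<alpha> * Max (Lc ` {..<n})"
      using \<open>0 < \<alpha>\<close> by (simp add: mult_left_mono)
    also have "\<dots> \<le> 1"
      using \<open>\<alpha> \<le> 1 / Max (Lc ` {..<n})\<close> \<open>Lc i \<le> Max (Lc ` {..<n})\<close> \<open>0 < Lc i\<close>
      by (simp add: field_simps)
    finally have "\<alpha> * Lc i \<le> 1" .
    moreover have "\<alpha> * \<mu> i \<le> \<alpha> * Lc i"
      using \<open>\<mu> i \<le> Lc i\<close> \<open>0 < \<alpha>\<close> by simp
    ultimately have "\<alpha> * (\<mu> i + Lc i) \<le> 2"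
      by (simp add: distrib_left)
    then show "\<alpha> \<le> 2 / (\<mu> i + Lc i)"
      using \<mu>[rule_format, OF that] \<open>0 < Lc i\<close> by (simp add: field_simps)
  qed
  have rate: "\<nu> \<le> \<alpha> * (2 * \<mu> i * Lc i / (\<mu> i + Lc i))" if "i < n" for i
  proof -
    have "\<nu> \<le> 2 * \<alpha> * (\<mu> i * Lc i / (\<mu> i + Lc i))"
      unfolding \<nu> using that \<open>0 < \<alpha>\<close> by (intro mult_left_mono Min_le) auto
    then show ?thesis by (simp add: mult_ac)
  qed
  show "\<nu> \<le> 1"
    using rate[OF \<open>0 < n\<close>] \<mu> \<open>0 < n\<close>
      gradient_step_rate_le_1[OF _ Lc(1)[OF \<open>0 < n\<close>] \<open>0 < \<alpha>\<close> Lc(3)[OF \<open>0 < n\<close>]]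
    by fastforce
  have "0 < \<mu> i * Lc i / (\<mu> i + Lc i)" if "i < n" for i
    using \<mu>[rule_format, OF that] Lc(2)[OF that] by simp
  then have "0 < Min ((\<lambda>i. \<mu> i * Lc i / (\<mu> i + Lc i)) ` {..<n})"
    using \<open>0 < n\<close> by (subst Min_gr_iff) auto
  then show "0 < \<nu>" unfolding \<nu> using \<open>0 < \<alpha>\<close> by simp
  show "(norm (z - \<alpha> *\<^sub>R g i z - ustar i))\<^sup>2 \<le> (1 - \<nu>) * (norm (z - ustar i))\<^sup>2" if "i < n" for i z
    using quadratically_bounded_step_to_minimizer[OF qb[OF that] \<mu>[rule_format, OF that] \<open>0 < \<alpha>\<close>
        Lc(3)[OF that] rate[OF that]] min that by blast
qed

theorem theorem2:
  fixes W :: "nat \<Rightarrow> nat \<Rightarrow> real" and n t :: nat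
    and f :: "nat \<Rightarrow> 'a::euclidean_space \<Rightarrow> real" and g :: "nat \<Rightarrow> 'a \<Rightarrow> 'a"
    and \<mu> Lc :: "nat \<Rightarrow> real" and \<alpha> \<beta> :: real
    and s0 xstar :: 'a and ustar :: "nat \<Rightarrow> 'a"
  assumes n_pos: "1 \<le> n" and t_pos: "1 \<le> t"
    and W_sds: "symmetric_doubly_stochastic W n"
    and W_diag: "\<forall>i<n. 0 < W i i"
    and W_conn: "connected_network W n"
    and W_one: "simple_eigenvalue_one W n"
    and W_others: "\<forall>e. is_eigenvalue W n e \<and> e \<noteq> 1 \<longrightarrow> -1 < e \<and> e < 1"
    and beta_def: "\<beta> = second_eig_mag W n"
    and beta_bds: "0 < \<beta>" "\<beta> < 1"
    and grad: "\<forall>i<n. is_gradient (f i) (g i)"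
    and mu_pos: "\<forall>i<n. 0 < \<mu> i"
    and sconv: "\<forall>i<n. strongly_convex (\<mu> i) (f i)"
    and lips: "\<forall>i<n. (Lc i)-lipschitz_on UNIV (g i)"
    and ustar_min: "\<forall>i<n. \<forall>z. f i (ustar i) \<le> f i z"
    and xstar_min: "\<forall>z. (\<Sum>i<n. f i xstar) \<le> (\<Sum>i<n. f i z)"
    and alpha_pos: "0 < \<alpha>"
    and alpha_le: "\<alpha> \<le> min (1 / Max (Lc ` {..<n}))
                        (2 / ((\<Sum>i<n. \<mu> i) / real n + (\<Sum>i<n. Lc i) / real n))"
  shows
    "let L = Max (Lc ` {..<n});
         mu_bar = (\<Sum>i<n. \<mu> i) / real n;
         L_bar = (\<Sum>i<n. Lc i) / real n;
         c2 = 2 * mu_bar * L_bar / (mu_bar + L_bar);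
         \<gamma> = Min ((\<lambda>i. \<mu> i * Lc i / (\<mu> i + Lc i)) ` {..<n});
         \<nu> = 2 * \<alpha> * \<gamma>;
         D = snorm n (\<lambda>i. s0 - ustar i) + (\<nu> + 4) / \<nu> * snorm n ustar;
         xbar = (\<lambda>k. avg n (near_dgd_x W n t \<alpha> g (\<lambda>i. s0) k))
     in (\<forall>\<delta>>0. \<forall>k.
           (norm (xbar (Suc k) - xstar))\<^sup>2
             \<le> (1 - \<alpha> * c2 + \<alpha> * \<delta> - \<alpha>\<^sup>2 * \<delta> * c2) * (norm (xbar k - xstar))\<^sup>2
               + \<alpha> * (\<alpha> + 1 / \<delta>) * D\<^sup>2 * L\<^sup>2 * \<beta> ^ (2 * t))
      \<and> (\<alpha> * c2 < 1 \<longrightarrow>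
           (let \<delta> = c2 / (2 * (1 - \<alpha> * c2));
                c1 = sqrt (1 - \<alpha> * c2 + \<alpha> * \<delta> - \<alpha>\<^sup>2 * \<delta> * c2)
            in c1 = sqrt (1 - \<alpha> * c2 / 2) \<and> 0 < c1 \<and> c1 < 1 \<and>
               (\<forall>k. norm (xbar k - xstar)
                      \<le> c1 ^ k * norm (xbar 0 - xstar)
                        + L * D * \<beta> ^ t / c2 * sqrt (2 * (2 - \<alpha> * c2)))))"
proof -
  define L where "L = Max (Lc ` {..<n})"
  define mu_bar where "mu_bar = (\<Sum>i<n. \<mu> i) / real n"
  define L_bar where "L_bar = (\<Sum>i<n. Lc i) / real n"
  define c2 where "c2 = 2 * mu_bar * L_bar / (mu_bar + L_bar)"
  define \<nu> where "\<nu> = 2 * \<alpha> * Min ((\<lambda>i. \<mu> i * Lc i / (\<mu> i + Lc i)) ` {..<n})"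
  define D where "D = snorm n (\<lambda>i. s0 - ustar i) + (\<nu> + 4) / \<nu> * snorm n ustar"
  define xbar where "xbar = (\<lambda>k. avg n (near_dgd_x W n t \<alpha> g (\<lambda>i. s0) k))"
  interpret mixing_matrix W n
    using W_sds W_one by unfold_locales (auto simp: symmetric_doubly_stochastic_def)
  have "0 < n" using n_pos by simp
  have qb: "\<And>i. i < n \<Longrightarrow> quadratically_bounded (\<mu> i) (Lc i) (f i) (g i)"
    using quadratically_bounded_if_strongly_convex_lipschitz sconv grad lips by blast
  have qb_avg: "quadratically_bounded mu_bar L_bar (\<lambda>z. (\<Sum>i<n. f i z) / real n) (\<lambda>z. avg n (\<lambda>i. g i z))"
    unfolding mu_bar_def L_bar_def by (rule quadratically_bounded_average[OF qb])
  have "0 < mu_bar" unfolding mu_bar_def using mu_pos \<open>0 < n\<close> by (intro divide_pos_pos sum_pos) auto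
  then have "0 < c2" using quadratically_bounded_le[OF qb_avg] by (simp add: c2_def)
  have contraction: "(norm (z - \<alpha> *\<^sub>R avg n (\<lambda>i. g i z) - xstar))\<^sup>2 \<le> (1 - \<alpha> * c2) * (norm (z - xstar))\<^sup>2" for z
    using quadratically_bounded_step_to_minimizer[OF qb_avg \<open>0 < mu_bar\<close> alpha_pos] alpha_le xstar_min \<open>0 < n\<close>
    by (simp add: mu_bar_def L_bar_def c2_def divide_right_mono)
  have "\<alpha> \<le> 1 / Max (Lc ` {..<n})" using alpha_le by simp
  note agent = near_dgd_agent_contraction[where g=g, OF \<open>0 < n\<close> qb mu_pos ustar_min alpha_pos this \<nu>_def]
  have Lc_le: "\<And>i. i < n \<Longrightarrow> Lc i \<le> L" unfolding L_def by (intro Max_ge) auto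
  have "\<bar>second_eig_mag W n\<bar> \<le> 1" using beta_def beta_bds by simp
  then have step: "\<forall>\<delta>>0. \<forall>k. (norm (xbar (Suc k) - xstar))\<^sup>2
      \<le> (1 - \<alpha> * c2 + \<alpha> * \<delta> - \<alpha>\<^sup>2 * \<delta> * c2) * (norm (xbar k - xstar))\<^sup>2 + \<alpha> * (\<alpha> + 1 / \<delta>) * D\<^sup>2 * L\<^sup>2 * \<beta> ^ (2 * t)"
    unfolding xbar_def beta_def
    using near_dgd_avg_recursion[where g=g and u=ustar,
        OF \<open>0 < n\<close> alpha_pos _ agent(3) agent(1,2) lips Lc_le contraction D_def] by simp
  have "0 \<le> L" using lipschitz_on_nonneg lips Lc_le \<open>0 < n\<close> by (meson order_trans)
  then have "0 \<le> L * D * \<beta> ^ t" using agent(1) beta_bds by (simp add: D_def snorm_nonneg)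
  have square: "\<alpha> * (\<alpha> + 1 / \<delta>) * D\<^sup>2 * L\<^sup>2 * \<beta> ^ (2 * t) = \<alpha> * (\<alpha> + 1 / \<delta>) * (L * D * \<beta> ^ t)\<^sup>2" for \<delta>
    by (simp add: power_mult_distrib power_mult mult_ac)
  have step_squared: "\<forall>\<delta>>0. \<forall>k. (norm (xbar (Suc k) - xstar))\<^sup>2
      \<le> (1 - \<alpha> * c2 + \<alpha> * \<delta> - \<alpha>\<^sup>2 * \<delta> * c2) * (norm (xbar k - xstar))\<^sup>2 + \<alpha> * (\<alpha> + 1 / \<delta>) * (L * D * \<beta> ^ t)\<^sup>2"
    unfolding square[symmetric] by (rule step)
  have "\<alpha> * c2 < 1 \<longrightarrow> (let \<delta> = c2 / (2 * (1 - \<alpha> * c2)); c1 = sqrt (1 - \<alpha> * c2 + \<alpha> * \<delta> - \<alpha>\<^sup>2 * \<delta> * c2)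
      in c1 = sqrt (1 - \<alpha> * c2 / 2) \<and> 0 < c1 \<and> c1 < 1 \<and>
         (\<forall>k. norm (xbar k - xstar) \<le> c1 ^ k * norm (xbar 0 - xstar) + L * D * \<beta> ^ t / c2 * sqrt (2 * (2 - \<alpha> * c2))))"
    using linear_rate_from_one_step[OF step_squared norm_ge_zero alpha_pos \<open>0 < c2\<close> _ \<open>0 \<le> L * D * \<beta> ^ t\<close>]
    by (rule impI)
  with step show ?thesis
    unfolding Let_def L_def mu_bar_def L_bar_def c2_def \<nu>_def D_def xbar_def by blast
qed

end
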